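(* For all integers $n\ge0$, $$\overline{bt}(32n+20)\equiv\overline{bt}(64n+40)\equiv\overline{bt}(128n+80)\equiv -\overline{bt}(16n+10)\pmod{128}.$$
   Context: For $|q|<1$ and a positive integer $k$ let $f_k:=\prod_{m=1}^\infty(1-q^{mk})$. The function $\overline{bt}(n)$ is defined by $\sum_{n\ge0}\overline{bt}(n)q^n=\frac{f_4^3}{f_1^6f_2^3}$. *)

theory Defs
  imports "HOL-Computational_Algebra.Formal_Power_Series" "HOL-Number_Theory.Cong"
begin

text \<open>The formal power series f_k = prod_{m>=1} (1 - q^(m k)) over the integers.
  Its n-th coefficient equals the n-th coefficient of the finite product over 1 <= m <= n
  (factors with m > n, k >= 1 do not affect coefficients of degree <= n).\<close>
definition eta_fps :: "nat \<Rightarrow> int fps" where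
  "eta_fps k = Abs_fps (\<lambda>n. fps_nth (\<Prod>m\<in>{1..n}. (1 - fps_X ^ (m * k) :: int fps)) n)"

text \<open>Generating function of bt-bar: the unique integer power series G with
  G * f_1^6 * f_2^3 = f_4^3 (i.e. G = f_4^3 / (f_1^6 f_2^3)).\<close>
definition btbar_fps :: "int fps" where
  "btbar_fps = (THE G. G * (eta_fps 1 ^ 6 * eta_fps 2 ^ 3) = eta_fps 4 ^ 3)"

definition btbar :: "nat \<Rightarrow> int" where
  "btbar n = fps_nth btbar_fps n"

end

theory Submission
  imports Defs
begin

text \<open>
  By Gauss's identities \<open>\<phi>(-q) f\<^sub>2 = f\<^sub>1\<^sup>2\<close> and \<open>\<phi>(-q\<^sup>2) f\<^sub>4 = f\<^sub>2\<^sup>2\<close>, together with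
  \<open>\<phi>(q) \<phi>(-q) = \<phi>(-q\<^sup>2)\<^sup>2\<close>, the generating function is \<open>\<phi>(q)\<^sup>3 / \<phi>(-q\<^sup>2)\<^sup>9\<close>.
  Put \<open>c = \<phi>(q\<^sup>2)\<close> and \<open>x = q \<psi>(q\<^sup>4)\<^sup>2\<close>; then \<open>\<phi>(q) = \<phi>(q\<^sup>4) + 2q \<psi>(q\<^sup>8)\<close>,
  \<open>\<phi>(q)\<^sup>2 = c\<^sup>2 + 4x\<close> and \<open>\<psi>(q\<^sup>2)\<^sup>2 = c \<psi>(q\<^sup>4)\<close>. Hence the even and odd parts of
  \<open>\<phi>(q) c\<^sup>m (\<alpha> c\<^sup>4 + \<beta> c\<^sup>2 x + \<gamma> x\<^sup>2) / \<phi>(-q\<^sup>2)\<^sup>n\<close> are, up to a factor \<open>(c\<^sup>2 + 4x)\<^sup>E\<close> and a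
  factor \<open>\<psi>(q\<^sup>4)\<close> or \<open>\<psi>(q\<^sup>2)\<close>, again of this form. Modulo 128 the binomial expansion of
  \<open>(c\<^sup>2 + 4x)\<^sup>E\<close> stops after the cubic term, so each dissection step is a computation on the
  triple \<open>(\<alpha>, \<beta>, \<gamma>)\<close>. Taking the even part one to four times and then the parts that select
  \<open>n \<mapsto> 16n + 10\<close> leaves \<open>\<plusminus>32 \<phi>(q) \<phi>(q\<^sup>2) \<psi>(q\<^sup>4) \<psi>(q)\<close> modulo 128, with the sign
  \<open>+\<close> only in the first case.
\<close>

unbundle fps_syntax

lemma dvd_diff_commute:
  fixes m :: "'a::comm_ring_1"
  shows "m dvd a - b \<longleftrightarrow> m dvd b - a"
  using dvd_minus_iff[of m "a - b"] by simp

lemma dvd_diff_trans: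
  fixes m :: "'a::comm_ring_1"
  assumes "m dvd a - b" "m dvd b - c"
  shows "m dvd a - c"
  using dvd_add[OF assms] by simp

lemma dvd_diff_mult:
  fixes m :: "'a::comm_ring_1"
  assumes "m dvd a - b" "m dvd c - d"
  shows "m dvd a * c - b * d"
proof -
  have "a * c - b * d = (a - b) * c + b * (c - d)"
    by (simp add: algebra_simps)
  with assms show ?thesis
    by simp
qed

lemma dvd_diff_mult_left:
  fixes m :: "'a::comm_ring_1"
  shows "m dvd a - b \<Longrightarrow> m dvd c * a - c * b"
  by (metis dvd_mult right_diff_distrib)

lemma dvd_diff_power:
  fixes m :: "'a::comm_ring_1"
  shows "m dvd a - b \<Longrightarrow> m dvd a ^ n - b ^ n"
  by (induction n) (simp_all add: dvd_diff_mult)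

lemma dvd_diff_prod:
  fixes m :: "'a::comm_ring_1"
  shows "(\<And>i. i \<in> S \<Longrightarrow> m dvd f i - g i) \<Longrightarrow> m dvd prod f S - prod g S"
  by (induction S rule: infinite_finite_induct) (simp_all add: dvd_diff_mult)

lemma of_int_dvd_of_int: "(m::int) dvd n \<Longrightarrow> (of_int m :: 'a::comm_ring_1) dvd of_int n"
  by (auto elim!: dvdE)

lemma fps_X_power_dvd_iff:
  fixes f :: "'a::comm_ring_1 fps"
  shows "fps_X ^ N dvd f \<longleftrightarrow> (\<forall>i<N. f $ i = 0)"
proof
  assume "fps_X ^ N dvd f"
  then obtain g where "f = fps_X ^ N * g" ..
  then show "\<forall>i<N. f $ i = 0"
    by (simp add: fps_X_power_mult_nth)
next
  assume "\<forall>i<N. f $ i = 0"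
  then have "fps_cutoff N f = 0"
    by (simp add: fps_eq_iff)
  then have "f = fps_X ^ N * fps_shift N f"
    using fps_shift_cutoff'[of N f] by simp
  then show "fps_X ^ N dvd f" ..
qed

lemma fps_eq_if_X_power_dvd:
  fixes f g :: "'a::comm_ring_1 fps"
  assumes "\<And>N. fps_X ^ N dvd f - g"
  shows "f = g"
proof (rule fps_ext)
  fix n
  from assms[of "Suc n"] show "f $ n = g $ n"
    unfolding fps_X_power_dvd_iff by simp
qed

lemma dvd_cancel_left_fps:
  fixes u :: "'a::comm_ring_1 fps"
  assumes "u $ 0 = 1" "m dvd u * f"
  shows "m dvd f"
proof -
  have "f = fps_right_inverse u 1 * (u * f)"
    using fps_right_inverse[of u 1] assms(1) by (simp add: algebra_simps)
  with assms(2) show ?thesis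
    by (metis dvd_mult)
qed

section \<open>Two-dissection of power series\<close>

definition fps_even_part :: "'a::comm_ring_1 fps \<Rightarrow> 'a fps" where
  "fps_even_part f = Abs_fps (\<lambda>n. f $ (2 * n))"

definition fps_odd_part :: "'a::comm_ring_1 fps \<Rightarrow> 'a fps" where
  "fps_odd_part f = Abs_fps (\<lambda>n. f $ (2 * n + 1))"

lemma fps_even_part_nth [simp]: "fps_even_part f $ n = f $ (2 * n)"
  by (simp add: fps_even_part_def)

lemma fps_odd_part_nth [simp]: "fps_odd_part f $ n = f $ (2 * n + 1)"
  by (simp add: fps_odd_part_def)

lemma fps_compose_X_power_nth:
  fixes f :: "'a::comm_ring_1 fps"
  assumes "k > 0"
  shows "(f oo fps_X ^ k) $ n = (if k dvd n then f $ (n div k) else 0)"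
proof -
  have "(f oo fps_X ^ k) $ n = (\<Sum>i = 0..n. f $ i * (if n = k * i then 1 else 0))"
    by (simp add: fps_compose_nth power_mult[symmetric] mult.commute)
  also have "\<dots> = (\<Sum>i\<in>{0..n} \<inter> {i. n = k * i}. f $ i)"
    by (simp add: sum.inter_restrict if_distrib cong: if_cong)
  also have "{0..n} \<inter> {i. n = k * i} = (if k dvd n then {n div k} else {})"
    using assms by (auto elim!: dvdE intro: dvd_triv_left)
  finally show ?thesis
    by simp
qed

lemma fps_compose_X_power_2_nth:
  fixes f :: "'a::comm_ring_1 fps"
  shows "(f oo fps_X ^ 2) $ n = (if even n then f $ (n div 2) else 0)"
  using fps_compose_X_power_nth[of 2 f n] by simp

lemma fps_even_part_add [simp]: "fps_even_part (f + g) = fps_even_part f + fps_even_part g"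
  and fps_even_part_diff [simp]: "fps_even_part (f - g) = fps_even_part f - fps_even_part g"
  and fps_even_part_uminus [simp]: "fps_even_part (- f) = - fps_even_part f"
  and fps_odd_part_add [simp]: "fps_odd_part (f + g) = fps_odd_part f + fps_odd_part g"
  and fps_odd_part_diff [simp]: "fps_odd_part (f - g) = fps_odd_part f - fps_odd_part g"
  and fps_odd_part_uminus [simp]: "fps_odd_part (- f) = - fps_odd_part f"
  by (simp_all add: fps_eq_iff)

lemma fps_even_part_X_mult [simp]: "fps_even_part (fps_X * f) = fps_X * fps_odd_part f"
proof (rule fps_ext)
  fix n
  show "fps_even_part (fps_X * f) $ n = (fps_X * fps_odd_part f) $ n"
    by (cases n) (simp_all add: fps_X_mult_nth)
qed

lemma fps_odd_part_X_mult [simp]: "fps_odd_part (fps_X * f) = fps_even_part f"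
  by (rule fps_ext) (simp add: fps_X_mult_nth)

lemma fps_even_part_compose_X2 [simp]: "fps_even_part (f oo fps_X ^ 2) = f"
  by (rule fps_ext) (simp add: fps_compose_X_power_2_nth)

lemma fps_odd_part_compose_X2 [simp]: "fps_odd_part (f oo fps_X ^ 2) = 0"
  by (rule fps_ext) (simp add: fps_compose_X_power_2_nth)

lemma fps_two_dissection:
  "f = (fps_even_part f oo fps_X ^ 2) + fps_X * (fps_odd_part f oo fps_X ^ 2)"
proof (rule fps_ext)
  fix n
  show "f $ n = ((fps_even_part f oo fps_X ^ 2) + fps_X * (fps_odd_part f oo fps_X ^ 2)) $ n"
    by (cases n) (auto simp: fps_compose_X_power_2_nth elim: oddE)
qed

lemma fps_compose_X2_mult:
  fixes f g :: "'a::idom fps"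
  shows "(f * g) oo fps_X ^ 2 = (f oo fps_X ^ 2) * (g oo fps_X ^ 2)"
  by (simp add: fps_compose_mult_distrib)

lemma fps_compose_X2_power:
  fixes f :: "'a::idom fps"
  shows "f ^ n oo fps_X ^ 2 = (f oo fps_X ^ 2) ^ n"
  by (simp add: fps_compose_power)

lemma fps_even_part_mult:
  fixes f g :: "'a::idom fps"
  shows "fps_even_part (f * g) =
    fps_even_part f * fps_even_part g + fps_X * (fps_odd_part f * fps_odd_part g)"
    (is "_ = ?e")
  and fps_odd_part_mult:
  "fps_odd_part (f * g) = fps_even_part f * fps_odd_part g + fps_odd_part f * fps_even_part g"
    (is "_ = ?o")
proof -
  have X2: "(fps_X oo fps_X ^ 2 :: 'a fps) = fps_X ^ 2"
    by simp
  have "f * g = ((fps_even_part f oo fps_X ^ 2) + fps_X * (fps_odd_part f oo fps_X ^ 2))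
              * ((fps_even_part g oo fps_X ^ 2) + fps_X * (fps_odd_part g oo fps_X ^ 2))"
    using fps_two_dissection[of f] fps_two_dissection[of g] by simp
  also have "\<dots> = (?e oo fps_X ^ 2) + fps_X * (?o oo fps_X ^ 2)"
    unfolding fps_compose_add_distrib fps_compose_X2_mult X2
    by (simp add: algebra_simps power2_eq_square)
  finally have fg: "f * g = (?e oo fps_X ^ 2) + fps_X * (?o oo fps_X ^ 2)" .
  show "fps_even_part (f * g) = ?e" "fps_odd_part (f * g) = ?o"
    by (subst fg, simp)+
qed

lemma fps_even_part_compose_X2_mult [simp]:
  fixes u g :: "'a::idom fps"
  shows "fps_even_part ((u oo fps_X ^ 2) * g) = u * fps_even_part g"
  by (simp add: fps_even_part_mult)

lemma fps_odd_part_compose_X2_mult [simp]: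
  fixes u g :: "'a::idom fps"
  shows "fps_odd_part ((u oo fps_X ^ 2) * g) = u * fps_odd_part g"
  by (simp add: fps_odd_part_mult)

lemma fps_X_power_dvd_compose:
  fixes f g h :: "'a::idom fps"
  assumes "h $ 0 = 0" "fps_X ^ N dvd f - g"
  shows "fps_X ^ N dvd (f oo h) - (g oo h)"
proof -
  obtain k where k: "f - g = fps_X ^ N * k"
    using assms(2) ..
  have "fps_X dvd h"
    using assms(1) fps_X_power_dvd_iff[of 1 h] by simp
  then have "fps_X ^ N dvd h ^ N"
    by (rule dvd_power_same)
  moreover have "(f oo h) - (g oo h) = h ^ N * (k oo h)"
    using assms(1) by (simp add: fps_compose_sub_distrib[symmetric] k fps_compose_mult_distrib
        fps_compose_power[symmetric])
  ultimately show ?thesis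
    by simp
qed

lemma fps_compose_uminus_X_nth: "(f oo - fps_X) $ n = (-1) ^ n * f $ n"
  for f :: "'a::comm_ring_1 fps"
  by (simp add: fps_compose_uminus')

lemma fps_compose_uminus_X_uminus_X [simp]: "f oo - fps_X oo - fps_X = f"
  for f :: "'a::comm_ring_1 fps"
  by (rule fps_ext) (simp add: fps_compose_uminus_X_nth flip: power_mult_distrib)

lemma fps_compose_X2_uminus_X [simp]: "f oo fps_X ^ 2 oo - fps_X = f oo fps_X ^ 2"
  for f :: "'a::comm_ring_1 fps"
  by (rule fps_ext) (auto simp: fps_compose_uminus_X_nth fps_compose_X_power_2_nth)

lemma fps_compose_X2_X2: "f oo fps_X ^ 2 oo fps_X ^ 2 = f oo fps_X ^ 4"
  for f :: "'a::comm_ring_1 fps"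
proof (rule fps_ext)
  fix n :: nat
  have "4 dvd n \<longleftrightarrow> even n \<and> even (n div 2)"
    by presburger
  then show "(f oo fps_X ^ 2 oo fps_X ^ 2) $ n = (f oo fps_X ^ 4) $ n"
    by (auto simp: fps_compose_X_power_2_nth fps_compose_X_power_nth div_mult2_eq[symmetric])
qed

lemma fps_even_part_compose_uminus_X [simp]: "fps_even_part (f oo - fps_X) = fps_even_part f"
  for f :: "'a::comm_ring_1 fps"
  by (rule fps_ext) (simp add: fps_compose_uminus_X_nth)

lemma fps_odd_part_compose_uminus_X [simp]: "fps_odd_part (f oo - fps_X) = - fps_odd_part f"
  for f :: "'a::comm_ring_1 fps"
  by (rule fps_ext) (simp add: fps_compose_uminus_X_nth)

lemma fps_compose_uminus_X_mult: "(f * g) oo - fps_X = (f oo - fps_X) * (g oo - fps_X)"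
  for f g :: "'a::idom fps"
  by (simp add: fps_compose_mult_distrib)

section \<open>Eta products\<close>

definition eta_partial :: "nat \<Rightarrow> nat \<Rightarrow> int fps" where
  "eta_partial k M = (\<Prod>m\<in>{1..M}. 1 - fps_X ^ (m * k))"

lemma eta_fps_nth: "eta_fps k $ n = eta_partial k n $ n"
  by (simp add: eta_fps_def eta_partial_def)

lemma eta_partial_cong:
  assumes "k \<ge> 1" "M \<le> M'"
  shows "fps_X ^ Suc M dvd eta_partial k M' - eta_partial k M"
proof -
  let ?tail = "\<Prod>m\<in>{Suc M..M'}. 1 - fps_X ^ (m * k) :: int fps"
  have "{1..M'} = {1..M} \<union> {Suc M..M'}"
    using assms by auto
  then have split: "eta_partial k M' = eta_partial k M * ?tail"
    unfolding eta_partial_def by (simp add: prod.union_disjoint)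
  have "fps_X ^ Suc M dvd ?tail - (\<Prod>m\<in>{Suc M..M'}. 1)"
  proof (rule dvd_diff_prod)
    fix m
    assume "m \<in> {Suc M..M'}"
    with assms(1) have "Suc M \<le> m * k"
      using le_trans[of "Suc M" m "m * k"] by simp
    then have "fps_X ^ Suc M dvd (fps_X ^ (m * k) :: int fps)"
      by (rule le_imp_power_dvd)
    then show "fps_X ^ Suc M dvd (1 - fps_X ^ (m * k)) - (1 :: int fps)"
      by simp
  qed
  then have "fps_X ^ Suc M dvd eta_partial k M * (?tail - 1)"
    by simp
  then show ?thesis
    unfolding split by (simp add: right_diff_distrib)
qed

lemma eta_fps_cong:
  assumes "k \<ge> 1" "N \<le> Suc M"
  shows "fps_X ^ N dvd eta_fps k - eta_partial k M"
  unfolding fps_X_power_dvd_iff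
proof (intro allI impI)
  fix i
  assume "i < N"
  with assms have "fps_X ^ Suc i dvd eta_partial k M - eta_partial k i"
    by (intro eta_partial_cong) auto
  then have "eta_partial k M $ i = eta_partial k i $ i"
    unfolding fps_X_power_dvd_iff by simp
  then show "(eta_fps k - eta_partial k M) $ i = 0"
    by (simp add: eta_fps_nth)
qed

lemma eta_fps_nth_0: "eta_fps k $ 0 = 1"
  by (simp add: eta_fps_nth eta_partial_def)

lemma eta_fps_nonzero: "eta_fps k \<noteq> 0"
  using eta_fps_nth_0[of k] by auto

lemma eta_partial_compose_X2: "eta_partial k M oo fps_X ^ 2 = eta_partial (2 * k) M"
  unfolding eta_partial_def
  by (simp add: fps_compose_prod_distrib fps_compose_sub_distrib fps_compose_power[symmetric]
      power_mult[symmetric] mult_ac)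

lemma eta_partial_compose_uminus_X: "eta_partial (2 * k) M oo - fps_X = eta_partial (2 * k) M"
  unfolding eta_partial_def
  by (simp add: fps_compose_prod_distrib fps_compose_sub_distrib fps_compose_power[symmetric]
      power_mult mult.left_commute[of _ 2])

lemma eta_fps_compose_X2:
  assumes "k \<ge> 1"
  shows "eta_fps k oo fps_X ^ 2 = eta_fps (2 * k)"
proof (rule fps_eq_if_X_power_dvd)
  fix N
  have "fps_X ^ N dvd (eta_fps k oo fps_X ^ 2) - (eta_partial k N oo fps_X ^ 2)"
    using assms by (intro fps_X_power_dvd_compose eta_fps_cong) auto
  moreover have "fps_X ^ N dvd eta_fps (2 * k) - eta_partial (2 * k) N"
    using assms by (intro eta_fps_cong) auto
  ultimately show "fps_X ^ N dvd (eta_fps k oo fps_X ^ 2) - eta_fps (2 * k)"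
    unfolding eta_partial_compose_X2 using dvd_diff_trans dvd_diff_commute by blast
qed

lemma eta_fps_2_compose_uminus_X: "eta_fps 2 oo - fps_X = eta_fps 2"
proof (rule fps_eq_if_X_power_dvd)
  fix N
  have "fps_X ^ N dvd (eta_fps 2 oo - fps_X) - (eta_partial 2 N oo - fps_X)"
    by (intro fps_X_power_dvd_compose eta_fps_cong) auto
  moreover have "fps_X ^ N dvd eta_fps 2 - eta_partial 2 N"
    by (intro eta_fps_cong) auto
  moreover have "eta_partial 2 N oo - fps_X = eta_partial 2 N"
    using eta_partial_compose_uminus_X[of 1 N] by simp
  ultimately show "fps_X ^ N dvd (eta_fps 2 oo - fps_X) - eta_fps 2"
    by (metis dvd_diff_trans dvd_diff_commute)
qed

lemma prod_atLeastAtMost_split_parity: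
  fixes g :: "nat \<Rightarrow> 'a::comm_monoid_mult"
  shows "(\<Prod>m = 1..2 * M. g m) = (\<Prod>i<M. g (2 * i + 1)) * (\<Prod>i = 1..M. g (2 * i))"
proof (induction M)
  case (Suc M)
  have "{1..2 * Suc M} = insert (2 * M + 2) (insert (2 * M + 1) {1..2 * M})"
    by auto
  with Suc show ?case
    by (simp add: algebra_simps)
qed simp

text \<open>Pair the factors \<open>1 - q\<^sup>m\<close> of \<open>f\<^sub>1(-q) f\<^sub>1(q)\<close> according to the parity of \<open>m\<close>.\<close>
lemma eta_partial_identity:
  "(eta_partial 1 (2 * M) oo - fps_X) * eta_partial 1 (2 * M) * eta_partial 4 M =
    eta_partial 2 M ^ 2 * eta_partial 2 (2 * M)"
proof -
  let ?g = "\<lambda>m. (1 - (- fps_X) ^ m) * (1 - fps_X ^ m) :: int fps"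
  have sq: "(1 - (- y)) * (1 - y) = 1 - y * y" for y :: "int fps"
    by (simp add: algebra_simps)
  have odd: "?g (2 * i + 1) = 1 - fps_X ^ ((2 * i + 1) * 2)" for i
  proof -
    have "(- fps_X) ^ (2 * i + 1) = - (fps_X ^ (2 * i + 1) :: int fps)"
      by (rule power_minus_odd) simp
    then show ?thesis
      unfolding power_mult power2_eq_square by (simp only: sq)
  qed
  have even: "?g (2 * i) = (1 - fps_X ^ (i * 2)) ^ 2" for i
    unfolding power_minus_even[of "2 * i", OF dvd_triv_left] power2_eq_square
    by (simp add: mult.commute[of 2])
  have "(eta_partial 1 (2 * M) oo - fps_X) * eta_partial 1 (2 * M) = (\<Prod>m = 1..2 * M. ?g m)"
    unfolding eta_partial_def
    by (simp add: fps_compose_prod_distrib fps_compose_sub_distrib fps_compose_power[symmetric]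
        prod.distrib)
  also have "\<dots> = (\<Prod>i<M. 1 - fps_X ^ ((2 * i + 1) * 2)) * eta_partial 2 M ^ 2"
    unfolding prod_atLeastAtMost_split_parity odd even eta_partial_def prod_power_distrib ..
  finally have "(eta_partial 1 (2 * M) oo - fps_X) * eta_partial 1 (2 * M) =
      (\<Prod>i<M. 1 - fps_X ^ ((2 * i + 1) * 2)) * eta_partial 2 M ^ 2" .
  moreover have "eta_partial 2 (2 * M) = (\<Prod>i<M. 1 - fps_X ^ ((2 * i + 1) * 2)) * eta_partial 4 M"
    unfolding eta_partial_def prod_atLeastAtMost_split_parity by (simp add: mult_ac)
  ultimately show ?thesis
    by (simp add: algebra_simps)
qed

lemma eta_fps_identity: "(eta_fps 1 oo - fps_X) * eta_fps 1 * eta_fps 4 = eta_fps 2 ^ 3"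
proof (rule fps_eq_if_X_power_dvd)
  fix N
  have "fps_X ^ N dvd (eta_fps 1 oo - fps_X) * eta_fps 1 * eta_fps 4
      - (eta_partial 1 (2 * N) oo - fps_X) * eta_partial 1 (2 * N) * eta_partial 4 N"
    by (intro dvd_diff_mult fps_X_power_dvd_compose eta_fps_cong) auto
  moreover have "fps_X ^ N dvd
      eta_fps 2 ^ 2 * eta_fps 2 - eta_partial 2 N ^ 2 * eta_partial 2 (2 * N)"
    by (intro dvd_diff_mult dvd_diff_power eta_fps_cong) auto
  moreover have "eta_fps 2 ^ 3 = eta_fps 2 ^ 2 * eta_fps 2"
    by (simp add: power3_eq_cube power2_eq_square)
  ultimately show "fps_X ^ N dvd (eta_fps 1 oo - fps_X) * eta_fps 1 * eta_fps 4 - eta_fps 2 ^ 3"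
    unfolding eta_partial_identity using dvd_diff_trans dvd_diff_commute by metis
qed

section \<open>Gaussian binomial coefficients\<close>

fun qbinomial :: "'a::comm_ring_1 \<Rightarrow> nat \<Rightarrow> nat \<Rightarrow> 'a" where
  "qbinomial t 0 j = (if j = 0 then 1 else 0)"
| "qbinomial t (Suc m) j =
    (if j = 0 then 1 else qbinomial t m (j - 1) + t ^ j * qbinomial t m j)"

lemma qbinomial_0_right [simp]: "qbinomial t m 0 = 1"
  by (cases m) auto

lemma qbinomial_eq_0: "m < j \<Longrightarrow> qbinomial t m j = 0"
  by (induction m arbitrary: j) auto

lemma qbinomial_diag: "qbinomial t m m = 1"
  by (induction m) (auto simp: qbinomial_eq_0)

definition qpochhammer :: "'a::comm_ring_1 \<Rightarrow> nat \<Rightarrow> 'a" where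
  "qpochhammer t k = (\<Prod>i = 1..k. 1 - t ^ i)"

lemma qpochhammer_0 [simp]: "qpochhammer t 0 = 1"
  by (simp add: qpochhammer_def)

lemma qpochhammer_Suc: "qpochhammer t (Suc k) = qpochhammer t k * (1 - t ^ Suc k)"
  by (simp add: qpochhammer_def)

lemma qbinomial_qpochhammer:
  "j \<le> m \<Longrightarrow> qbinomial t m j * qpochhammer t j * qpochhammer t (m - j) = qpochhammer t m"
proof (induction m arbitrary: j)
  case (Suc m)
  show ?case
  proof (cases j)
    case (Suc i)
    show ?thesis
    proof (cases "i = m")
      case False
      with Suc \<open>j \<le> Suc m\<close> have "i < m"
        by simp
      have IH1: "qbinomial t m i * qpochhammer t i * qpochhammer t (m - i) = qpochhammer t m"
        using Suc.IH[of i] \<open>i < m\<close> by simp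
      have IH2: "qbinomial t m (Suc i) * qpochhammer t (Suc i) * qpochhammer t (m - Suc i) =
          qpochhammer t m"
        using Suc.IH[of "Suc i"] \<open>i < m\<close> by simp
      have split: "qpochhammer t (m - i) = qpochhammer t (m - Suc i) * (1 - t ^ (m - i))"
        using \<open>i < m\<close> qpochhammer_Suc[of t "m - Suc i"] by (simp add: Suc_diff_Suc)
      have "Suc i + (m - i) = Suc m"
        using \<open>i < m\<close> by simp
      then have exp: "t ^ Suc i * t ^ (m - i) = t ^ Suc m"
        by (metis power_add)
      have "qbinomial t (Suc m) j * qpochhammer t j * qpochhammer t (Suc m - j) =
          (qbinomial t m i + t ^ Suc i * qbinomial t m (Suc i)) *
            qpochhammer t (Suc i) * qpochhammer t (m - i)"
        using Suc by simp
      also have "\<dots> =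
          (qbinomial t m i * qpochhammer t i * qpochhammer t (m - i)) * (1 - t ^ Suc i) +
          t ^ Suc i * (1 - t ^ (m - i)) *
            (qbinomial t m (Suc i) * qpochhammer t (Suc i) * qpochhammer t (m - Suc i))"
        unfolding split qpochhammer_Suc[of t i] by (simp add: algebra_simps)
      also have "\<dots> = qpochhammer t m * (1 - t ^ Suc i * t ^ (m - i))"
        unfolding IH1 IH2 by (simp add: algebra_simps)
      also have "\<dots> = qpochhammer t (Suc m)"
        unfolding exp qpochhammer_Suc ..
      finally show ?thesis .
    qed (use Suc in \<open>simp add: qbinomial_diag\<close>)
  qed simp
qed simp

lemma qbinomial_theorem:
  fixes y t :: "'a::comm_ring_1"
  shows "(\<Prod>i<m. y + t ^ i) = (\<Sum>j\<le>m. qbinomial t m j * t ^ ((m - j) choose 2) * y ^ j)"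
proof (induction m)
  case (Suc m)
  define c where "c j = qbinomial t m j * t ^ ((m - j) choose 2)" for j
  have choose_Suc: "Suc k choose 2 = (k choose 2) + k" for k
    by (simp add: numeral_2_eq_2)
  have "(\<Prod>i<Suc m. y + t ^ i) = (\<Sum>j\<le>m. c j * y ^ j) * (y + t ^ m)"
    using Suc by (simp add: c_def)
  also have "\<dots> = (\<Sum>j\<le>m. c j * y ^ Suc j) + (\<Sum>j\<le>m. c j * t ^ m * y ^ j)"
    by (simp add: distrib_left sum_distrib_left sum_distrib_right sum.distrib mult_ac)
  finally have L: "(\<Prod>i<Suc m. y + t ^ i) =
      (\<Sum>j\<le>m. c j * y ^ Suc j) + (\<Sum>j\<le>m. c j * t ^ m * y ^ j)" .
  have S2: "(\<Sum>j\<le>m. c j * t ^ m * y ^ j) = t ^ (Suc m choose 2)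
      + (\<Sum>j<m. qbinomial t m (Suc j) * t ^ ((m - Suc j) choose 2) * t ^ m * y ^ Suc j)"
    by (subst sum.atMost_shift) (simp add: c_def choose_Suc power_add)
  have S3: "(\<Sum>j\<le>m. t ^ Suc j * qbinomial t m (Suc j) * t ^ ((m - j) choose 2) * y ^ Suc j) =
      (\<Sum>j<m. qbinomial t m (Suc j) * t ^ ((m - Suc j) choose 2) * t ^ m * y ^ Suc j)"
  proof -
    have "qbinomial t m (Suc j) * t ^ ((m - Suc j) choose 2) * t ^ m * y ^ Suc j =
        t ^ Suc j * qbinomial t m (Suc j) * t ^ ((m - j) choose 2) * y ^ Suc j" if "j < m" for j
    proof -
      have "Suc j + ((m - j) choose 2) = ((m - Suc j) choose 2) + m"
        using that choose_Suc[of "m - Suc j"] by (simp add: Suc_diff_Suc)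
      then have e: "t ^ ((m - Suc j) choose 2) * t ^ m = t ^ Suc j * t ^ ((m - j) choose 2)"
        by (metis power_add)
      have "qbinomial t m (Suc j) * t ^ ((m - Suc j) choose 2) * t ^ m * y ^ Suc j =
          qbinomial t m (Suc j) * (t ^ ((m - Suc j) choose 2) * t ^ m) * y ^ Suc j"
        by (simp only: mult.assoc)
      then show ?thesis
        unfolding e by (simp only: mult_ac)
    qed
    then show ?thesis
      by (simp add: lessThan_Suc_atMost[symmetric] qbinomial_eq_0)
  qed
  have R: "(\<Sum>j\<le>Suc m. qbinomial t (Suc m) j * t ^ ((Suc m - j) choose 2) * y ^ j) =
      t ^ (Suc m choose 2) + (\<Sum>j\<le>m. c j * y ^ Suc j)
      + (\<Sum>j\<le>m. t ^ Suc j * qbinomial t m (Suc j) * t ^ ((m - j) choose 2) * y ^ Suc j)"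
    by (subst sum.atMost_Suc_shift) (simp add: c_def algebra_simps sum.distrib)
  show ?case
    using L S2 S3 R by (simp add: algebra_simps)
qed (simp add: numeral_2_eq_2)

section \<open>Gauss's identity\<close>

definition odd_eta_partial :: "nat \<Rightarrow> int fps" where
  "odd_eta_partial n = (\<Prod>i<n. 1 - fps_X ^ (2 * i + 1))"

definition nat_dist :: "nat \<Rightarrow> nat \<Rightarrow> nat" where
  "nat_dist n j = (if j \<le> n then n - j else j - n)"

lemma sum_lessThan_id_eq_choose_2: "(\<Sum>i<n. i) = n choose 2"
  by (induction n) (simp_all add: numeral_2_eq_2)

lemma two_times_choose_2: "2 * (k choose 2) = k * (k - 1)"
proof -
  have "even (k * (k - 1))"
    by (cases "even k") auto
  then show ?thesis
    by (simp add: choose_two)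
qed

lemma prod_lessThan_add:
  fixes f :: "nat \<Rightarrow> 'a::comm_monoid_mult"
  shows "(\<Prod>i<n + m. f i) = (\<Prod>i<n. f i) * (\<Prod>i<m. f (n + i))"
  by (induction m) (simp_all add: mult.assoc)

lemma triple_product_exponent:
  assumes "1 \<le> n" "j \<le> 2 * n"
  shows "2 * ((2 * n - j) choose 2) + (2 * n - 1) * j =
    2 * (n choose 2) + (2 * n - 1) * n + (nat_dist n j)\<^sup>2"
proof -
  have sq: "int (2 * (k choose 2)) = int k * (int k - 1)" for k
    unfolding two_times_choose_2 by (cases k) (auto simp: algebra_simps)
  have "int (nat_dist n j) = \<bar>int n - int j\<bar>"
    by (simp add: nat_dist_def of_nat_diff)
  then have d: "int ((nat_dist n j)\<^sup>2) = (int n - int j)\<^sup>2"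
    by simp
  have "int (2 * ((2 * n - j) choose 2) + (2 * n - 1) * j) =
      (2 * int n - int j) * (2 * int n - int j - 1) + (2 * int n - 1) * int j"
    using sq[of "2 * n - j"] assms by (simp add: of_nat_diff)
  also have "\<dots> = int n * (int n - 1) + (2 * int n - 1) * int n + (int n - int j)\<^sup>2"
    by (simp add: algebra_simps power2_eq_square)
  also have "\<dots> = int (2 * (n choose 2) + (2 * n - 1) * n + (nat_dist n j)\<^sup>2)"
    using sq[of n] d assms by (simp add: of_nat_diff)
  finally show ?thesis
    by (simp only: of_nat_eq_iff)
qed

lemma triple_product_lower_half:
  "(\<Prod>i<n. - (fps_X ^ (2 * n - 1)) + (fps_X ^ 2) ^ i) =
    fps_X ^ (2 * (n choose 2)) * odd_eta_partial n"
proof -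
  have "- (fps_X ^ (2 * n - 1)) + (fps_X ^ 2) ^ i =
      fps_X ^ (2 * i) * (1 - fps_X ^ (2 * (n - Suc i) + 1) :: int fps)" if "i < n" for i
  proof -
    from that have "2 * i + (2 * (n - Suc i) + 1) = 2 * n - 1"
      by auto
    then have "fps_X ^ (2 * n - 1) = fps_X ^ (2 * i) * (fps_X ^ (2 * (n - Suc i) + 1) :: int fps)"
      by (metis power_add)
    then show ?thesis
      by (simp add: power_mult[symmetric] algebra_simps)
  qed
  then have "(\<Prod>i<n. - (fps_X ^ (2 * n - 1)) + (fps_X ^ 2) ^ i) =
      (\<Prod>i<n. fps_X ^ (2 * i)) * (\<Prod>i<n. 1 - fps_X ^ (2 * (n - Suc i) + 1) :: int fps)"
    by (simp add: prod.distrib)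
  also have "(\<Prod>i<n. 1 - fps_X ^ (2 * (n - Suc i) + 1) :: int fps) = odd_eta_partial n"
    unfolding odd_eta_partial_def by (rule prod.nat_diff_reindex)
  finally show ?thesis
    by (simp add: power_sum[symmetric] sum_distrib_left[symmetric] sum_lessThan_id_eq_choose_2)
qed

lemma triple_product_upper_half:
  assumes "1 \<le> n"
  shows "(\<Prod>i<n. - (fps_X ^ (2 * n - 1)) + (fps_X ^ 2) ^ (n + i)) =
    (-1) ^ n * fps_X ^ ((2 * n - 1) * n) * odd_eta_partial n"
proof -
  have "(\<Prod>i<n. - (fps_X ^ (2 * n - 1)) + (fps_X ^ 2) ^ (n + i)) =
      (\<Prod>i<n. - (fps_X ^ (2 * n - 1)) * (1 - fps_X ^ (2 * i + 1) :: int fps))"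
  proof (rule prod.cong[OF refl])
    fix i
    from assms have "(2 * n - 1) + (2 * i + 1) = 2 * (n + i)"
      by auto
    then have "fps_X ^ (2 * n - 1) * fps_X ^ (2 * i + 1) = (fps_X ^ (2 * (n + i)) :: int fps)"
      by (metis power_add)
    then show "- (fps_X ^ (2 * n - 1)) + (fps_X ^ 2) ^ (n + i) =
        - (fps_X ^ (2 * n - 1)) * (1 - fps_X ^ (2 * i + 1) :: int fps)"
      by (simp add: power_mult[symmetric] algebra_simps)
  qed
  also have "\<dots> = (- (fps_X ^ (2 * n - 1))) ^ n * odd_eta_partial n"
    by (simp only: prod.distrib prod_constant card_lessThan odd_eta_partial_def)
  finally show ?thesis
    by (subst (asm) power_minus) (simp only: power_mult)
qed

text \<open>A finite form of Jacobi's triple product: Cauchy's theorem with \<open>t = q\<^sup>2\<close> and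
  \<open>y = -q\<^bsup>2n-1\<^esup>\<close>.\<close>
lemma odd_eta_partial_square:
  assumes "1 \<le> n"
  shows "odd_eta_partial n ^ 2 = (\<Sum>j\<le>2 * n.
    (-1) ^ (n + j) * fps_X ^ (nat_dist n j)\<^sup>2 * qbinomial (fps_X ^ 2) (2 * n) j)"
proof -
  define E where "E = 2 * (n choose 2) + (2 * n - 1) * n"
  let ?y = "- (fps_X ^ (2 * n - 1)) :: int fps"
  have "(\<Prod>i<2 * n. ?y + (fps_X ^ 2) ^ i) =
      (\<Prod>i<n. ?y + (fps_X ^ 2) ^ i) * (\<Prod>i<n. ?y + (fps_X ^ 2) ^ (n + i))"
    using prod_lessThan_add[of "\<lambda>i. ?y + (fps_X ^ 2) ^ i" n n] by (simp add: mult_2)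
  also have "\<dots> = fps_X ^ (2 * (n choose 2)) * fps_X ^ ((2 * n - 1) * n) *
      ((-1) ^ n * (odd_eta_partial n * odd_eta_partial n))"
    unfolding triple_product_lower_half triple_product_upper_half[OF assms] by (simp only: mult_ac)
  finally have "(\<Prod>i<2 * n. ?y + (fps_X ^ 2) ^ i) = fps_X ^ E * ((-1) ^ n * odd_eta_partial n ^ 2)"
    by (simp only: E_def power_add power2_eq_square)
  moreover have "(\<Sum>j\<le>2 * n. qbinomial (fps_X ^ 2) (2 * n) j * (fps_X ^ 2) ^ ((2 * n - j) choose 2)
      * ?y ^ j) = (\<Sum>j\<le>2 * n. fps_X ^ E *
        ((-1) ^ j * fps_X ^ (nat_dist n j)\<^sup>2 * qbinomial (fps_X ^ 2) (2 * n) j))"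
  proof (rule sum.cong[OF refl])
    fix j
    assume "j \<in> {..2 * n}"
    then have "2 * ((2 * n - j) choose 2) + (2 * n - 1) * j = E + (nat_dist n j)\<^sup>2"
      using triple_product_exponent[OF assms] by (simp add: E_def)
    moreover have "(fps_X ^ 2) ^ ((2 * n - j) choose 2) * ?y ^ j =
        (-1) ^ j * fps_X ^ (2 * ((2 * n - j) choose 2) + (2 * n - 1) * j)"
      by (simp add: power_minus[of "fps_X ^ _"] power_mult[symmetric] power_add)
    ultimately show
      "qbinomial (fps_X ^ 2) (2 * n) j * (fps_X ^ 2) ^ ((2 * n - j) choose 2) * ?y ^ j =
        fps_X ^ E * ((-1) ^ j * fps_X ^ (nat_dist n j)\<^sup>2 * qbinomial (fps_X ^ 2) (2 * n) j)"
      by (simp add: power_add algebra_simps)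
  qed
  ultimately have "fps_X ^ E * ((-1) ^ n * odd_eta_partial n ^ 2) = fps_X ^ E *
      (\<Sum>j\<le>2 * n. (-1) ^ j * fps_X ^ (nat_dist n j)\<^sup>2 * qbinomial (fps_X ^ 2) (2 * n) j)"
    unfolding qbinomial_theorem sum_distrib_left by simp
  then have "(-1) ^ n * odd_eta_partial n ^ 2 =
      (\<Sum>j\<le>2 * n. (-1) ^ j * fps_X ^ (nat_dist n j)\<^sup>2 * qbinomial (fps_X ^ 2) (2 * n) j)"
    by (simp add: power_not_zero)
  then have "(-1) ^ n * ((-1) ^ n * odd_eta_partial n ^ 2) = (\<Sum>j\<le>2 * n.
      (-1) ^ n * ((-1) ^ j * fps_X ^ (nat_dist n j)\<^sup>2 * qbinomial (fps_X ^ 2) (2 * n) j))"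
    by (simp add: sum_distrib_left)
  then show ?thesis
    by (simp add: power_add mult.assoc flip: power_mult_distrib)
qed

text \<open>Ramanujan's \<open>\<phi>(q) = \<Sum>\<^sub>k\<^sub>\<in>\<^sub>\<int> q\<^bsup>k\<^sup>2\<^esup>\<close>: the \<open>n\<close>-th coefficient counts the
  integers \<open>k\<close> with \<open>k\<^sup>2 = n\<close>.\<close>
definition ramanujan_phi :: "int fps" where
  "ramanujan_phi = Abs_fps (\<lambda>n. if n = 0 then 1 else if \<exists>k. n = k\<^sup>2 then 2 else 0)"

lemma ramanujan_phi_nth:
  "ramanujan_phi $ n = (if n = 0 then 1 else if \<exists>k. n = k\<^sup>2 then 2 else 0)"
  by (simp add: ramanujan_phi_def)

lemma fps_minus_one_power: "(-1 :: 'a::comm_ring_1 fps) ^ k = fps_const ((-1) ^ k)"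
  by (induction k) simp_all

lemma minus_one_power_eq: "even (a + b) \<Longrightarrow> (-1::int) ^ a = (-1) ^ b"
  by (cases "even a") (auto simp: minus_one_power_iff)

lemma theta_partial_sum_cong:
  assumes "N \<le> n"
  shows "fps_X ^ N dvd
    (\<Sum>j\<le>2 * n. (-1) ^ (n + j) * fps_X ^ (nat_dist n j)\<^sup>2) - (ramanujan_phi oo - fps_X)"
  unfolding fps_X_power_dvd_iff
proof (intro allI impI)
  fix i
  assume "i < N"
  let ?S = "\<Sum>j\<le>2 * n. (-1) ^ (n + j) * fps_X ^ (nat_dist n j)\<^sup>2 :: int fps"
  have "?S $ i = (\<Sum>j\<le>2 * n. if (nat_dist n j)\<^sup>2 = i then (-1::int) ^ (n + j) else 0)"
    by (auto simp: fps_sum_nth fps_minus_one_power intro!: sum.cong)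
  also have "\<dots> = (\<Sum>j\<in>{j\<in>{..2 * n}. (nat_dist n j)\<^sup>2 = i}. (-1::int) ^ (n + j))"
    by (rule sum.inter_filter[symmetric]) simp
  finally have S: "?S $ i = (\<Sum>j\<in>{j\<in>{..2 * n}. (nat_dist n j)\<^sup>2 = i}. (-1::int) ^ (n + j))" .
  show "(?S - (ramanujan_phi oo - fps_X)) $ i = 0"
  proof (cases "\<exists>k. i = k\<^sup>2")
    case False
    then have E: "{j\<in>{..2 * n}. (nat_dist n j)\<^sup>2 = i} = {}" and "i \<noteq> 0"
      by (auto simp: power2_eq_square) (metis mult_zero_left neq0_conv)
    with False show ?thesis
      by (simp only: fps_sub_nth S E)
        (simp add: fps_compose_uminus_X_nth ramanujan_phi_nth)
  next
    case True
    then obtain k where k: "i = k\<^sup>2" ..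
    have "k \<le> k\<^sup>2"
      by (simp add: power2_eq_square)
    with k \<open>i < N\<close> assms have "k < n"
      by linarith
    then have S': "{j\<in>{..2 * n}. (nat_dist n j)\<^sup>2 = i} = {n - k, n + k}"
      unfolding k power2_eq_iff_nonneg[OF zero_le zero_le]
      by (auto simp: nat_dist_def split: if_splits)
    have "(-1::int) ^ (n + (n - k)) = (-1) ^ k" "(-1::int) ^ (n + (n + k)) = (-1) ^ k"
        "(-1::int) ^ k\<^sup>2 = (-1) ^ k"
      using \<open>k < n\<close> by (auto intro!: minus_one_power_eq simp: power2_eq_square)
    then show ?thesis
      unfolding fps_sub_nth S S' using k \<open>k < n\<close>
      by (cases "k = 0") (auto simp: fps_compose_uminus_X_nth ramanujan_phi_nth)
  qed
qed

lemma qpochhammer_X2: "qpochhammer (fps_X ^ 2) k = eta_partial 2 k"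
  unfolding qpochhammer_def eta_partial_def
  by (rule prod.cong[OF refl]) (simp add: power_mult[symmetric] mult.commute)

lemma eta_partial_1_double: "eta_partial 1 (2 * n) = odd_eta_partial n * eta_partial 2 n"
  unfolding eta_partial_def odd_eta_partial_def prod_atLeastAtMost_split_parity
  by (simp add: mult.commute)

lemma qbinomial_eta_partial_cong:
  assumes "N \<le> j" "N \<le> 2 * n - j" "j \<le> 2 * n"
  shows "fps_X ^ N dvd qbinomial (fps_X ^ 2) (2 * n) j * eta_partial 2 n ^ 2 - eta_fps 2"
proof -
  let ?g = "qbinomial (fps_X ^ 2) (2 * n) j :: int fps" and ?\<eta> = "eta_fps 2"
  have P: "fps_X ^ N dvd eta_partial 2 M - ?\<eta>" if "N \<le> Suc M" for M
    using eta_fps_cong[of 2 N M] that dvd_diff_commute by auto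
  have "?g * eta_partial 2 j * eta_partial 2 (2 * n - j) = eta_partial 2 (2 * n)"
    using qbinomial_qpochhammer[OF assms(3), of "fps_X ^ 2 :: int fps"]
    by (simp add: qpochhammer_X2)
  moreover have "fps_X ^ N dvd ?g * eta_partial 2 j * eta_partial 2 (2 * n - j) - ?g * ?\<eta> * ?\<eta>"
    using assms by (intro dvd_diff_mult P) auto
  ultimately have "fps_X ^ N dvd ?g * ?\<eta> * ?\<eta> - eta_partial 2 (2 * n)"
    using dvd_diff_commute by metis
  moreover have "fps_X ^ N dvd eta_partial 2 (2 * n) - ?\<eta>"
    using assms by (intro P) auto
  ultimately have "fps_X ^ N dvd ?g * ?\<eta> * ?\<eta> - ?\<eta>"
    by (rule dvd_diff_trans)
  then have "fps_X ^ N dvd ?\<eta> * (?g * ?\<eta> - 1)"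
    by (simp add: algebra_simps)
  then have "fps_X ^ N dvd ?g * ?\<eta> - 1"
    by (rule dvd_cancel_left_fps[rotated]) (simp add: eta_fps_nth_0)
  then have "fps_X ^ N dvd ?\<eta> * (?g * ?\<eta> - 1)"
    by simp
  then have "fps_X ^ N dvd ?g * ?\<eta> ^ 2 - ?\<eta>"
    by (simp add: algebra_simps power2_eq_square)
  moreover have "fps_X ^ N dvd ?g * eta_partial 2 n ^ 2 - ?g * ?\<eta> ^ 2"
    using assms by (intro dvd_diff_mult dvd_diff_power P) auto
  ultimately show ?thesis
    using dvd_diff_trans by blast
qed

theorem gauss_identity: "(ramanujan_phi oo - fps_X) * eta_fps 2 = eta_fps 1 ^ 2"
proof (rule fps_eq_if_X_power_dvd)
  fix N :: nat
  define n where "n = 2 * N + 1"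
  have n1: "1 \<le> n"
    by (simp add: n_def)
  let ?t = "\<lambda>j::nat. (-1) ^ (n + j) * fps_X ^ (nat_dist n j)\<^sup>2 :: int fps"
  let ?\<eta> = "eta_fps 2"
  have "fps_X ^ N dvd eta_fps 1 ^ 2 - eta_partial 1 (2 * n) ^ 2"
    by (intro dvd_diff_power eta_fps_cong) (auto simp: n_def)
  also have "eta_partial 1 (2 * n) ^ 2 = odd_eta_partial n ^ 2 * eta_partial 2 n ^ 2"
    unfolding eta_partial_1_double power_mult_distrib ..
  also have "\<dots> = (\<Sum>j\<le>2 * n. ?t j * (qbinomial (fps_X ^ 2) (2 * n) j * eta_partial 2 n ^ 2))"
    unfolding odd_eta_partial_square[OF n1] sum_distrib_right by (simp add: mult.assoc)
  finally have "fps_X ^ N dvd eta_fps 1 ^ 2 -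
      (\<Sum>j\<le>2 * n. ?t j * (qbinomial (fps_X ^ 2) (2 * n) j * eta_partial 2 n ^ 2))" .
  moreover have "fps_X ^ N dvd
      (\<Sum>j\<le>2 * n. ?t j * (qbinomial (fps_X ^ 2) (2 * n) j * eta_partial 2 n ^ 2)) -
      (\<Sum>j\<le>2 * n. ?t j * ?\<eta>)"
    unfolding sum_subtractf[symmetric] right_diff_distrib[symmetric]
  proof (rule dvd_sum)
    fix j
    assume "j \<in> {..2 * n}"
    show "fps_X ^ N dvd ?t j * (qbinomial (fps_X ^ 2) (2 * n) j * eta_partial 2 n ^ 2 - ?\<eta>)"
    proof (cases "N \<le> (nat_dist n j)\<^sup>2")
      case True
      then have "fps_X ^ N dvd ?t j"
        by (simp add: le_imp_power_dvd)
      then show ?thesis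
        by simp
    next
      case False
      moreover have "nat_dist n j \<le> (nat_dist n j)\<^sup>2"
        by (simp add: power2_eq_square)
      ultimately have "N \<le> j" "N \<le> 2 * n - j"
        by (auto simp: nat_dist_def n_def split: if_splits)
      with \<open>j \<in> {..2 * n}\<close> show ?thesis
        by (simp add: qbinomial_eta_partial_cong)
    qed
  qed
  ultimately have "fps_X ^ N dvd eta_fps 1 ^ 2 - (\<Sum>j\<le>2 * n. ?t j) * ?\<eta>"
    unfolding sum_distrib_right by (rule dvd_diff_trans)
  moreover have "fps_X ^ N dvd (\<Sum>j\<le>2 * n. ?t j) * ?\<eta> - (ramanujan_phi oo - fps_X) * ?\<eta>"
    by (intro dvd_diff_mult theta_partial_sum_cong) (auto simp: n_def)
  ultimately have "fps_X ^ N dvd eta_fps 1 ^ 2 - (ramanujan_phi oo - fps_X) * ?\<eta>"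
    by (rule dvd_diff_trans)
  then show "fps_X ^ N dvd (ramanujan_phi oo - fps_X) * ?\<eta> - eta_fps 1 ^ 2"
    by (simp only: dvd_diff_commute)
qed

section \<open>Ramanujan's theta functions \<open>\<phi>\<close> and \<open>\<psi>\<close>\<close>

text \<open>\<open>\<psi>(q) = \<Sum>\<^sub>k\<^sub>\<ge>\<^sub>0 q\<^bsup>k(k+1)/2\<^esup>\<close>; the exponent \<open>m = k(k+1)/2\<close> is characterised by
  \<open>8m + 1 = (2k+1)\<^sup>2\<close>.\<close>
definition ramanujan_psi :: "int fps" where
  "ramanujan_psi = Abs_fps (\<lambda>m. if \<exists>k. 8 * m + 1 = k\<^sup>2 then 1 else 0)"

lemma double_eq_square_iff:
  fixes n :: nat
  shows "(\<exists>k. 2 * n = k\<^sup>2) \<longleftrightarrow> even n \<and> (\<exists>j. n div 2 = j\<^sup>2)"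
proof
  assume "\<exists>k. 2 * n = k\<^sup>2"
  then obtain k where k: "2 * n = k\<^sup>2" ..
  then have "even k"
    by (metis dvd_triv_left even_mult_iff power2_eq_square)
  then obtain j where "k = 2 * j" ..
  with k show "even n \<and> (\<exists>j. n div 2 = j\<^sup>2)"
    by (auto simp: power2_eq_square)
next
  assume "even n \<and> (\<exists>j. n div 2 = j\<^sup>2)"
  then obtain j where "n = 2 * j\<^sup>2"
    by auto
  then have "2 * n = (2 * j)\<^sup>2"
    by (simp add: power2_eq_square)
  then show "\<exists>k. 2 * n = k\<^sup>2" ..
qed

lemma odd_eq_square_iff:
  fixes n :: nat
  shows "(\<exists>k. 2 * n + 1 = k\<^sup>2) \<longleftrightarrow> 4 dvd n \<and> (\<exists>k. 8 * (n div 4) + 1 = k\<^sup>2)"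
proof
  assume "\<exists>k. 2 * n + 1 = k\<^sup>2"
  then obtain k where k: "2 * n + 1 = k\<^sup>2" ..
  then have "odd k"
    by (metis even_mult_iff even_plus_one_iff power2_eq_square dvd_triv_left)
  then obtain j where "k = 2 * j + 1" ..
  with k have n: "n = 2 * (j * (j + 1))"
    by (simp add: power2_eq_square algebra_simps)
  have "even (j * (j + 1))"
    by simp
  then obtain m where "j * (j + 1) = 2 * m" ..
  with n have "n = 4 * m"
    by simp
  with k show "4 dvd n \<and> (\<exists>k. 8 * (n div 4) + 1 = k\<^sup>2)"
    by auto
qed auto

lemma fps_even_part_ramanujan_phi: "fps_even_part ramanujan_phi = ramanujan_phi oo fps_X ^ 2"
  by (rule fps_ext)
    (auto simp: ramanujan_phi_nth fps_compose_X_power_2_nth double_eq_square_iff)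

lemma fps_odd_part_ramanujan_phi: "fps_odd_part ramanujan_phi = 2 * (ramanujan_psi oo fps_X ^ 4)"
proof (rule fps_ext)
  fix n :: nat
  show "fps_odd_part ramanujan_phi $ n = (2 * (ramanujan_psi oo fps_X ^ 4)) $ n"
    using odd_eq_square_iff[of n]
    by (simp add: ramanujan_phi_nth numeral_fps_const fps_compose_X_power_nth ramanujan_psi_def)
qed

lemma gauss_identity_uminus: "ramanujan_phi * eta_fps 2 = (eta_fps 1 oo - fps_X) ^ 2"
  using arg_cong[OF gauss_identity, of "\<lambda>f. f oo - fps_X"]
  by (simp add: fps_compose_uminus_X_mult fps_compose_power[symmetric] eta_fps_2_compose_uminus_X)

lemma gauss_identity_X2:
  "(ramanujan_phi oo - fps_X oo fps_X ^ 2) * eta_fps 4 = eta_fps 2 ^ 2"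
  using arg_cong[OF gauss_identity, of "\<lambda>f. f oo fps_X ^ 2"]
  by (simp add: fps_compose_X2_mult fps_compose_X2_power eta_fps_compose_X2)

lemma ramanujan_phi_mult_uminus:
  "ramanujan_phi * (ramanujan_phi oo - fps_X) = (ramanujan_phi oo - fps_X oo fps_X ^ 2) ^ 2"
proof -
  let ?\<phi> = ramanujan_phi and ?\<phi>' = "ramanujan_phi oo - fps_X"
    and ?\<phi>'' = "ramanujan_phi oo - fps_X oo fps_X ^ 2"
  have "(?\<phi> * ?\<phi>') * (eta_fps 2 ^ 2 * eta_fps 4 ^ 2) =
      ((eta_fps 1 oo - fps_X) * eta_fps 1 * eta_fps 4) ^ 2"
    using gauss_identity gauss_identity_uminus
    by (simp add: power2_eq_square mult_ac)
  also have "\<dots> = ?\<phi>'' ^ 2 * (eta_fps 2 ^ 2 * eta_fps 4 ^ 2)"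
    using gauss_identity_X2 unfolding eta_fps_identity
    by (simp add: power2_eq_square power3_eq_cube mult_ac)
  finally show ?thesis
    by (simp add: eta_fps_nonzero power_mult_distrib mult_ac)
qed

lemma ramanujan_phi_square:
  "ramanujan_phi ^ 2 =
    (ramanujan_phi oo fps_X ^ 2) ^ 2 + 4 * fps_X * (ramanujan_psi oo fps_X ^ 4) ^ 2"
proof -
  let ?c = "ramanujan_phi oo fps_X ^ 2" and ?p = "ramanujan_psi oo fps_X ^ 4"
  have "fps_even_part (ramanujan_phi * (ramanujan_phi oo - fps_X)) = ?c ^ 2 - 4 * fps_X * ?p ^ 2"
    by (simp add: fps_even_part_mult fps_even_part_ramanujan_phi fps_odd_part_ramanujan_phi
        power2_eq_square algebra_simps)
  then have "(ramanujan_phi oo - fps_X) ^ 2 = ?c ^ 2 - 4 * fps_X * ?p ^ 2"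
    by (simp add: ramanujan_phi_mult_uminus fps_compose_X2_power[symmetric])
  then have "(ramanujan_phi oo - fps_X) ^ 2 oo - fps_X = (?c ^ 2 - 4 * fps_X * ?p ^ 2) oo - fps_X"
    by simp
  moreover have "?p oo - fps_X = ?p"
    by (simp flip: fps_compose_X2_X2)
  ultimately show ?thesis
    by (simp add: fps_compose_sub_distrib fps_compose_uminus_X_mult fps_compose_power[symmetric])
qed

lemma ramanujan_psi_square:
  "(ramanujan_psi oo fps_X ^ 2) ^ 2 = (ramanujan_phi oo fps_X ^ 2) * (ramanujan_psi oo fps_X ^ 4)"
proof -
  let ?c = "ramanujan_phi oo fps_X ^ 2" and ?p = "ramanujan_psi oo fps_X ^ 4"
    and ?P = "ramanujan_psi oo fps_X ^ 2"
  have "fps_odd_part (ramanujan_phi ^ 2) = 4 * (?c * ?p)"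
    by (simp add: power2_eq_square fps_odd_part_mult fps_even_part_ramanujan_phi
        fps_odd_part_ramanujan_phi)
  moreover have "?c ^ 2 + 4 * fps_X * ?p ^ 2 = (ramanujan_phi ^ 2 oo fps_X ^ 2)
      + fps_X * (4 * ?P ^ 2 oo fps_X ^ 2)"
    by (simp add: fps_compose_X2_power fps_compose_X2_mult fps_compose_X2_X2 mult_ac)
  then have "fps_odd_part (?c ^ 2 + 4 * fps_X * ?p ^ 2) = 4 * ?P ^ 2"
    by simp
  ultimately show ?thesis
    using ramanujan_phi_square by simp
qed

section \<open>The generating function of \<open>bt\<close>\<close>

definition phi_neg_inv :: "int fps" where
  "phi_neg_inv = fps_right_inverse (ramanujan_phi oo - fps_X) 1"

lemma ramanujan_phi_uminus_X_mult_inv: "(ramanujan_phi oo - fps_X) * phi_neg_inv = 1"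
  unfolding phi_neg_inv_def by (rule fps_right_inverse) (simp add: ramanujan_phi_nth)

lemma ramanujan_phi_uminus_X2_mult_inv:
  "(ramanujan_phi oo - fps_X oo fps_X ^ 2) * (phi_neg_inv oo fps_X ^ 2) = 1"
  using arg_cong[OF ramanujan_phi_uminus_X_mult_inv, of "\<lambda>f. f oo fps_X ^ 2"]
  by (simp add: fps_compose_X2_mult)

lemma phi_neg_inv_eq: "phi_neg_inv = ramanujan_phi * (phi_neg_inv oo fps_X ^ 2) ^ 2"
proof -
  let ?b = phi_neg_inv and ?d = "phi_neg_inv oo fps_X ^ 2"
  have "ramanujan_phi * ?d ^ 2 = ramanujan_phi * ((ramanujan_phi oo - fps_X) * ?b) * ?d ^ 2"
    by (simp add: ramanujan_phi_uminus_X_mult_inv)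
  also have "\<dots> = (ramanujan_phi * (ramanujan_phi oo - fps_X)) * ?d ^ 2 * ?b"
    by (simp only: mult_ac)
  also have "\<dots> = ((ramanujan_phi oo - fps_X oo fps_X ^ 2) * ?d) ^ 2 * ?b"
    by (simp only: ramanujan_phi_mult_uminus power_mult_distrib)
  finally show ?thesis
    by (simp add: ramanujan_phi_uminus_X2_mult_inv)
qed

lemma btbar_fps_eq: "btbar_fps = ramanujan_phi ^ 3 * (phi_neg_inv oo fps_X ^ 2) ^ 9"
proof -
  let ?b = phi_neg_inv and ?d = "phi_neg_inv oo fps_X ^ 2"
  let ?W = "eta_fps 1 ^ 6 * eta_fps 2 ^ 3"
  have "?W = (ramanujan_phi oo - fps_X) ^ 3 * (ramanujan_phi oo - fps_X oo fps_X ^ 2) ^ 3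
      * eta_fps 4 ^ 3"
  proof -
    have "eta_fps 1 ^ 6 = (eta_fps 1 ^ 2) ^ 3"
      by (simp flip: power_mult)
    then have "?W = ((ramanujan_phi oo - fps_X) * eta_fps 2) ^ 3 * eta_fps 2 ^ 3"
      by (simp only: gauss_identity)
    also have "\<dots> = (ramanujan_phi oo - fps_X) ^ 3 * (eta_fps 2 ^ 2) ^ 3"
      by (simp add: power_mult_distrib power2_eq_square power3_eq_cube mult_ac)
    finally show ?thesis
      by (simp flip: gauss_identity_X2 add: power_mult_distrib mult_ac)
  qed
  then have "(?b ^ 3 * ?d ^ 3) * ?W =
      ((ramanujan_phi oo - fps_X) * ?b * ((ramanujan_phi oo - fps_X oo fps_X ^ 2) * ?d)) ^ 3
      * eta_fps 4 ^ 3"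
    by (simp add: power_mult_distrib mult_ac)
  then have "(?b ^ 3 * ?d ^ 3) * ?W = eta_fps 4 ^ 3"
    by (simp only: ramanujan_phi_uminus_X_mult_inv ramanujan_phi_uminus_X2_mult_inv) simp
  moreover have "G = ?b ^ 3 * ?d ^ 3" if "G * ?W = eta_fps 4 ^ 3" for G
  proof -
    have "?W \<noteq> 0"
      by (simp add: eta_fps_nonzero)
    with that calculation show ?thesis
      by (metis mult_right_cancel)
  qed
  ultimately have "btbar_fps = ?b ^ 3 * ?d ^ 3"
    unfolding btbar_fps_def by (rule the_equality)
  then show ?thesis
    by (subst (asm) phi_neg_inv_eq)
      (simp add: power_mult_distrib mult.assoc flip: power_mult power_add)
qed

section \<open>Reduction modulo 128\<close>

fun qform :: "int \<times> int \<times> int \<Rightarrow> 'a \<Rightarrow> 'a \<Rightarrow> 'a::comm_ring_1" where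
  "qform (\<alpha>, \<beta>, \<gamma>) c x = of_int \<alpha> * c ^ 4 + of_int \<beta> * c ^ 2 * x + of_int \<gamma> * x ^ 2"

fun expand_coeffs :: "int \<Rightarrow> int \<times> int \<times> int \<Rightarrow> int \<times> int \<times> int" where
  "expand_coeffs E (\<alpha>, \<beta>, \<gamma>) = (\<alpha>, \<beta> + 4 * E * \<alpha>, \<gamma> + 4 * E * \<beta> + 8 * E * (E - 1) * \<alpha>)"

fun binomial_tail_vanishes :: "int \<Rightarrow> int \<times> int \<times> int \<Rightarrow> bool" where
  "binomial_tail_vanishes E (\<alpha>, \<beta>, \<gamma>) \<longleftrightarrow>
    128 dvd 4 * E * \<gamma> + 8 * E * (E - 1) * \<beta> + 96 * E * (E - 1) * (E - 2) * \<alpha> \<and>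
    128 dvd 8 * E * (E - 1) * \<gamma> + 96 * E * (E - 1) * (E - 2) * \<beta> \<and>
    128 dvd 96 * E * (E - 1) * (E - 2) * \<gamma>"

text \<open>Modulo 128 the binomial expansion of \<open>(y + 4w)\<^sup>E\<close> stops after the cubic term; the cubic
  coefficient \<open>96 E(E-1)(E-2)\<close> agrees with \<open>4\<^sup>3 (E choose 3)\<close> modulo 128, and using it
  instead keeps the induction free of division.\<close>
lemma binomial_truncation:
  fixes y w :: "'a::comm_ring_1"
  shows "128 dvd (y + 4 * w) ^ (k + 3) - y ^ k * (y ^ 3 + of_nat (4 * (k + 3)) * y\<^sup>2 * w
    + of_nat (8 * (k + 3) * (k + 2)) * y * w\<^sup>2 + of_nat (96 * (k + 3) * (k + 2) * (k + 1)) * w ^ 3)"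
proof (induction k)
  case 0
  show ?case
    by (rule dvdI[where k = "- 4 * w ^ 3"])
      (simp add: power3_eq_cube power2_eq_square algebra_simps)
next
  case (Suc k)
  let ?K = "of_nat k :: 'a"
  obtain h where h: "(y + 4 * w) ^ (k + 3) = y ^ k * (y ^ 3 + 4 * (?K + 3) * y\<^sup>2 * w
    + 8 * (?K + 3) * (?K + 2) * y * w\<^sup>2 + 96 * (?K + 3) * (?K + 2) * (?K + 1) * w ^ 3) + 128 * h"
    using Suc.IH by (auto elim!: dvdE simp: algebra_simps)
  have "(y + 4 * w) ^ (Suc k + 3) = (y + 4 * w) * (y + 4 * w) ^ (k + 3)"
    by (simp only: add_Suc power_Suc)
  then have "(y + 4 * w) ^ (Suc k + 3) - y ^ Suc k * (y ^ 3 + of_nat (4 * (Suc k + 3)) * y\<^sup>2 * w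
      + of_nat (8 * (Suc k + 3) * (Suc k + 2)) * y * w\<^sup>2
      + of_nat (96 * (Suc k + 3) * (Suc k + 2) * (Suc k + 1)) * w ^ 3)
    = 128 * ((y + 4 * w) * h + 3 * (?K + 3) * (?K + 2) * (?K + 1) * y ^ k * w ^ 4
        - 2 * (?K + 3) * (?K + 2) * y ^ Suc k * w ^ 3)"
    unfolding h by (simp add: power2_eq_square power3_eq_cube power4_eq_xxxx algebra_simps)
  then show ?case
    by (rule dvdI)
qed

lemma cubic_mult_qform:
  fixes c x A B C :: "'a::comm_ring_1"
  shows "(c ^ 6 + A * c ^ 4 * x + B * c\<^sup>2 * x\<^sup>2 + C * x ^ 3)
      * (a * c ^ 4 + b * c\<^sup>2 * x + g * x\<^sup>2) =
    c ^ 6 * (a * c ^ 4 + (b + A * a) * c\<^sup>2 * x + (g + A * b + B * a) * x\<^sup>2)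
    + (A * g + B * b + C * a) * c ^ 4 * x ^ 3 + (B * g + C * b) * c\<^sup>2 * x ^ 4 + C * g * x ^ 5"
  by (simp add: eval_nat_numeral algebra_simps)

lemma power_qform_reduction:
  fixes a c x :: "'a::comm_ring_1"
  assumes a: "a\<^sup>2 = c\<^sup>2 + 4 * x" and "3 \<le> E" and tail: "binomial_tail_vanishes (int E) t"
  shows "128 dvd (a\<^sup>2) ^ E * qform t c x - c ^ (2 * E) * qform (expand_coeffs (int E) t) c x"
proof -
  obtain k where k: "E = k + 3"
    using \<open>3 \<le> E\<close> le_Suc_ex by (metis add.commute)
  obtain \<alpha> \<beta> \<gamma> where t: "t = (\<alpha>, \<beta>, \<gamma>)"
    by (cases t) auto
  define A :: int where "A = 4 * int E"
  define B :: int where "B = 8 * int E * (int E - 1)"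
  define C :: int where "C = 96 * int E * (int E - 1) * (int E - 2)"
  let ?P = "c ^ 6 + of_int A * c ^ 4 * x + of_int B * c\<^sup>2 * x\<^sup>2 + of_int C * x ^ 3"
  have "128 dvd (c\<^sup>2 + 4 * x) ^ E - (c\<^sup>2) ^ k * ?P"
    using binomial_truncation[of "c\<^sup>2" x k] unfolding k A_def B_def C_def
    by (simp add: algebra_simps flip: power_mult)
  then have trunc: "128 dvd ((c\<^sup>2 + 4 * x) ^ E - (c\<^sup>2) ^ k * ?P) * qform t c x"
    by (rule dvd_mult2)
  define R where "R = of_int (A * \<gamma> + B * \<beta> + C * \<alpha>) * c ^ 4 * x ^ 3
    + of_int (B * \<gamma> + C * \<beta>) * c\<^sup>2 * x ^ 4 + of_int (C * \<gamma>) * (x ^ 5 :: 'a)"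
  have tail': "128 dvd (c\<^sup>2) ^ k * R"
  proof -
    have "128 dvd A * \<gamma> + B * \<beta> + C * \<alpha>" "128 dvd B * \<gamma> + C * \<beta>" "128 dvd C * \<gamma>"
      using tail unfolding t A_def B_def C_def by (simp_all add: mult_ac)
    then have "(128 :: 'a) dvd of_int (A * \<gamma> + B * \<beta> + C * \<alpha>)"
      "(128 :: 'a) dvd of_int (B * \<gamma> + C * \<beta>)" "(128 :: 'a) dvd of_int (C * \<gamma>)"
      by (metis of_int_dvd_of_int of_int_numeral)+
    then show ?thesis
      unfolding R_def by (intro dvd_mult dvd_add dvd_mult2)
  qed
  have PQ: "?P * qform t c x = c ^ 6 * qform (expand_coeffs (int E) t) c x + R"
    unfolding t qform.simps cubic_mult_qform R_def by (simp add: A_def B_def C_def algebra_simps)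
  have "((c\<^sup>2 + 4 * x) ^ E - (c\<^sup>2) ^ k * ?P) * qform t c x + (c\<^sup>2) ^ k * R =
      (c\<^sup>2 + 4 * x) ^ E * qform t c x - (c\<^sup>2) ^ k * c ^ 6 * qform (expand_coeffs (int E) t) c x"
    unfolding left_diff_distrib mult.assoc[of "(c\<^sup>2) ^ k"] PQ by (simp add: algebra_simps)
  then have "128 dvd (c\<^sup>2 + 4 * x) ^ E * qform t c x
      - (c\<^sup>2) ^ k * c ^ 6 * qform (expand_coeffs (int E) t) c x"
    using dvd_add[OF trunc tail'] by simp
  moreover have "(c\<^sup>2) ^ k * c ^ 6 = c ^ (2 * E)"
    by (simp add: k power_add flip: power_mult)
  ultimately show ?thesis
    by (simp add: a mult.assoc)
qed

section \<open>Dissecting products of theta functions\<close>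

definition phi2 :: "int fps" where "phi2 = ramanujan_phi oo fps_X ^ 2"
definition psi2 :: "int fps" where "psi2 = ramanujan_psi oo fps_X ^ 2"
definition psi4 :: "int fps" where "psi4 = ramanujan_psi oo fps_X ^ 4"
definition phi_neg_inv2 :: "int fps" where "phi_neg_inv2 = phi_neg_inv oo fps_X ^ 2"
definition q_psi4_sq :: "int fps" where "q_psi4_sq = fps_X * psi4\<^sup>2"

lemma fps_compose_of_int [simp]: "(of_int k :: 'a::comm_ring_1 fps) oo f = of_int k"
  by (simp add: fps_of_int[symmetric])

lemma fps_even_part_ramanujan_phi': "fps_even_part ramanujan_phi = phi2"
  and fps_odd_part_ramanujan_phi': "fps_odd_part ramanujan_phi = 2 * psi4"
  by (simp_all add: phi2_def psi4_def fps_even_part_ramanujan_phi fps_odd_part_ramanujan_phi)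

lemma ramanujan_phi_square': "ramanujan_phi\<^sup>2 = phi2\<^sup>2 + 4 * q_psi4_sq"
  using ramanujan_phi_square by (simp add: phi2_def psi4_def q_psi4_sq_def mult.assoc)

lemma psi2_square: "psi2\<^sup>2 = phi2 * psi4"
  using ramanujan_psi_square by (simp add: phi2_def psi2_def psi4_def)

lemma psi4_eq: "psi4 = psi2 oo fps_X ^ 2"
  by (simp add: psi2_def psi4_def fps_compose_X2_X2)

lemma phi2_power: "phi2 ^ m = ramanujan_phi ^ m oo fps_X ^ 2"
  and phi_neg_inv2_power: "phi_neg_inv2 ^ m = phi_neg_inv ^ m oo fps_X ^ 2"
  by (simp_all add: phi2_def phi_neg_inv2_def fps_compose_X2_power)

lemma qform_dissection:
  "qform (\<alpha>, \<beta>, \<gamma>) phi2 q_psi4_sq =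
    ((of_int \<alpha> * ramanujan_phi ^ 4 + of_int \<gamma> * fps_X * psi2 ^ 4) oo fps_X ^ 2)
    + fps_X * ((of_int \<beta> * ramanujan_phi\<^sup>2 * psi2\<^sup>2) oo fps_X ^ 2)"
proof -
  have "fps_X oo fps_X ^ 2 = (fps_X ^ 2 :: int fps)"
    by simp
  then show ?thesis
    unfolding q_psi4_sq_def psi4_eq
    by (simp only: qform.simps fps_compose_add_distrib fps_compose_X2_mult fps_compose_X2_power
        fps_compose_of_int phi2_def) (simp add: power_mult_distrib algebra_simps eval_nat_numeral)
qed

fun even_part_coeffs :: "int \<times> int \<times> int \<Rightarrow> int \<times> int \<times> int" where
  "even_part_coeffs (\<alpha>, \<beta>, \<gamma>) = (\<alpha>, 8 * \<alpha> + 2 * \<beta> + \<gamma>, 16 * \<alpha> + 8 * \<beta>)"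

fun odd_part_coeffs :: "int \<times> int \<times> int \<Rightarrow> int \<times> int \<times> int" where
  "odd_part_coeffs (\<alpha>, \<beta>, \<gamma>) = (2 * \<alpha> + \<beta>, 16 * \<alpha> + 4 * \<beta> + 2 * \<gamma>, 32 * \<alpha>)"

lemma ramanujan_phi_power_4: "ramanujan_phi ^ 4 = (phi2\<^sup>2 + 4 * q_psi4_sq)\<^sup>2"
  by (simp add: ramanujan_phi_square'[symmetric] flip: power_mult)

lemma psi2_power_4: "psi2 ^ 4 = phi2\<^sup>2 * psi4\<^sup>2"
proof -
  have "psi2 ^ 4 = (psi2\<^sup>2)\<^sup>2"
    by (simp flip: power_mult)
  then show ?thesis
    by (simp add: psi2_square power_mult_distrib)
qed

lemma fps_even_part_phi_qform:
  "fps_even_part (ramanujan_phi * qform t phi2 q_psi4_sq) =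
    phi2 * qform (even_part_coeffs t) phi2 q_psi4_sq"
proof (cases t)
  case (fields \<alpha> \<beta> \<gamma>)
  show ?thesis
    unfolding fields qform_dissection fps_even_part_mult
    by (simp add: fps_even_part_ramanujan_phi' fps_odd_part_ramanujan_phi' ramanujan_phi_power_4
        psi2_power_4 psi2_square ramanujan_phi_square')
      (simp add: q_psi4_sq_def eval_nat_numeral algebra_simps)
qed

lemma fps_odd_part_phi_qform:
  "fps_odd_part (ramanujan_phi * qform t phi2 q_psi4_sq) =
    psi4 * qform (odd_part_coeffs t) phi2 q_psi4_sq"
proof (cases t)
  case (fields \<alpha> \<beta> \<gamma>)
  show ?thesis
    unfolding fields qform_dissection fps_odd_part_mult
    by (simp add: fps_even_part_ramanujan_phi' fps_odd_part_ramanujan_phi' ramanujan_phi_power_4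
        psi2_power_4 psi2_square ramanujan_phi_square')
      (simp add: q_psi4_sq_def eval_nat_numeral algebra_simps)
qed

lemma fps_odd_part_qform:
  "fps_odd_part (qform (\<alpha>, \<beta>, \<gamma>) phi2 q_psi4_sq) = of_int \<beta> * ramanujan_phi\<^sup>2 * phi2 * psi4"
  unfolding qform_dissection by (simp add: psi2_square)

definition phi_form :: "int \<times> int \<times> int \<Rightarrow> nat \<Rightarrow> nat \<Rightarrow> int fps" where
  "phi_form t m n = ramanujan_phi * phi2 ^ m * phi_neg_inv2 ^ n * qform t phi2 q_psi4_sq"

definition phi_psi4_form :: "int \<times> int \<times> int \<Rightarrow> nat \<Rightarrow> nat \<Rightarrow> int fps" where
  "phi_psi4_form t m n =
    ramanujan_phi * phi2 ^ m * phi_neg_inv2 ^ n * psi4 * qform t phi2 q_psi4_sq"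

definition psi2_form :: "int \<times> int \<times> int \<Rightarrow> nat \<Rightarrow> nat \<Rightarrow> int fps" where
  "psi2_form t m n = phi2 ^ m * phi_neg_inv2 ^ n * psi2 * qform t phi2 q_psi4_sq"

lemma phi_neg_inv_power: "phi_neg_inv ^ n = ramanujan_phi ^ n * phi_neg_inv2 ^ (2 * n)"
  by (subst phi_neg_inv_eq) (simp add: phi_neg_inv2_def power_mult_distrib power_mult)

lemma fps_even_part_phi_form:
  "fps_even_part (phi_form t m n) =
    ramanujan_phi ^ (m + n) * phi2 * phi_neg_inv2 ^ (2 * n) *
      qform (even_part_coeffs t) phi2 q_psi4_sq"
  and fps_odd_part_phi_form:
  "fps_odd_part (phi_form t m n) =
    ramanujan_phi ^ (m + n) * phi_neg_inv2 ^ (2 * n) * psi4 *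
      qform (odd_part_coeffs t) phi2 q_psi4_sq"
proof -
  have "phi_form t m n = ((ramanujan_phi ^ m * phi_neg_inv ^ n) oo fps_X ^ 2)
      * (ramanujan_phi * qform t phi2 q_psi4_sq)"
    by (simp add: phi_form_def phi2_power phi_neg_inv2_power fps_compose_X2_mult mult_ac)
  then have "fps_even_part (phi_form t m n) = (ramanujan_phi ^ m * phi_neg_inv ^ n) *
      fps_even_part (ramanujan_phi * qform t phi2 q_psi4_sq)"
    and "fps_odd_part (phi_form t m n) = (ramanujan_phi ^ m * phi_neg_inv ^ n) *
      fps_odd_part (ramanujan_phi * qform t phi2 q_psi4_sq)"
    by (simp_all only: fps_even_part_compose_X2_mult fps_odd_part_compose_X2_mult)
  then show "fps_even_part (phi_form t m n) =
      ramanujan_phi ^ (m + n) * phi2 * phi_neg_inv2 ^ (2 * n) *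
        qform (even_part_coeffs t) phi2 q_psi4_sq"
    and "fps_odd_part (phi_form t m n) =
      ramanujan_phi ^ (m + n) * phi_neg_inv2 ^ (2 * n) * psi4 *
        qform (odd_part_coeffs t) phi2 q_psi4_sq"
    by (simp_all add: fps_even_part_phi_qform fps_odd_part_phi_qform phi_neg_inv_power power_add
        mult_ac)
qed

lemma fps_even_part_phi_psi4_form:
  "fps_even_part (phi_psi4_form t m n) =
    ramanujan_phi ^ (m + n) * phi2 * phi_neg_inv2 ^ (2 * n) * psi2 *
      qform (even_part_coeffs t) phi2 q_psi4_sq"
proof -
  have "phi_psi4_form t m n = ((ramanujan_phi ^ m * phi_neg_inv ^ n * psi2) oo fps_X ^ 2)
      * (ramanujan_phi * qform t phi2 q_psi4_sq)"
    by (simp add: phi_psi4_form_def phi2_power phi_neg_inv2_power psi4_eq fps_compose_X2_mult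
        mult_ac)
  then have "fps_even_part (phi_psi4_form t m n) = (ramanujan_phi ^ m * phi_neg_inv ^ n * psi2) *
      fps_even_part (ramanujan_phi * qform t phi2 q_psi4_sq)"
    by (simp only: fps_even_part_compose_X2_mult)
  then show ?thesis
    by (simp add: fps_even_part_phi_qform phi_neg_inv_power power_add mult_ac)
qed

lemma fps_odd_part_psi2_form:
  "fps_odd_part (psi2_form (\<alpha>, \<beta>, \<gamma>) m n) =
    of_int \<beta> * ramanujan_phi ^ (m + n + 2) * phi2 * phi_neg_inv2 ^ (2 * n) * psi4 * ramanujan_psi"
proof -
  have "psi2_form (\<alpha>, \<beta>, \<gamma>) m n =
      ((ramanujan_phi ^ m * phi_neg_inv ^ n * ramanujan_psi) oo fps_X ^ 2)
      * qform (\<alpha>, \<beta>, \<gamma>) phi2 q_psi4_sq"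
    by (simp only: psi2_form_def phi2_power phi_neg_inv2_power psi2_def fps_compose_X2_mult)
  then have "fps_odd_part (psi2_form (\<alpha>, \<beta>, \<gamma>) m n) =
      (ramanujan_phi ^ m * phi_neg_inv ^ n * ramanujan_psi) *
      fps_odd_part (qform (\<alpha>, \<beta>, \<gamma>) phi2 q_psi4_sq)"
    by (simp only: fps_odd_part_compose_X2_mult)
  then show ?thesis
    by (simp only: fps_odd_part_qform)
      (simp add: phi_neg_inv_power power_add power2_eq_square mult_ac)
qed

lemma int_fps_numeral_dvd_iff: "(numeral k :: int fps) dvd f \<longleftrightarrow> (\<forall>n. numeral k dvd f $ n)"
proof
  assume "numeral k dvd f"
  then obtain g where "f = numeral k * g" ..
  then show "\<forall>n. numeral k dvd f $ n"
    by (simp add: numeral_fps_const)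
next
  assume "\<forall>n. numeral k dvd f $ n"
  then have "f = numeral k * Abs_fps (\<lambda>n. f $ n div numeral k)"
    by (simp add: fps_eq_iff numeral_fps_const)
  then show "numeral k dvd f" ..
qed

lemma numeral_dvd_fps_even_part: "(numeral k :: int fps) dvd f \<Longrightarrow> numeral k dvd fps_even_part f"
  and numeral_dvd_fps_odd_part: "(numeral k :: int fps) dvd f \<Longrightarrow> numeral k dvd fps_odd_part f"
  by (simp_all add: int_fps_numeral_dvd_iff)

lemma fps_even_part_cong_trans:
  "(numeral k :: int fps) dvd F - G \<Longrightarrow> numeral k dvd fps_even_part G - H \<Longrightarrow>
    numeral k dvd fps_even_part F - H"
  using numeral_dvd_fps_even_part[of k "F - G"] dvd_diff_trans by simp

lemma fps_odd_part_cong_trans: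
  "(numeral k :: int fps) dvd F - G \<Longrightarrow> numeral k dvd fps_odd_part G - H \<Longrightarrow>
    numeral k dvd fps_odd_part F - H"
  using numeral_dvd_fps_odd_part[of k "F - G"] dvd_diff_trans by simp

fun coeffs_mod_128 :: "int \<times> int \<times> int \<Rightarrow> int \<times> int \<times> int" where
  "coeffs_mod_128 (\<alpha>, \<beta>, \<gamma>) = (\<alpha> mod 128, \<beta> mod 128, \<gamma> mod 128)"

lemma qform_coeffs_cong:
  assumes "coeffs_mod_128 t = coeffs_mod_128 t'"
  shows "128 dvd qform t c x - qform t' c (x :: 'a::comm_ring_1)"
proof -
  obtain \<alpha> \<beta> \<gamma> \<alpha>' \<beta>' \<gamma>' where t: "t = (\<alpha>, \<beta>, \<gamma>)" "t' = (\<alpha>', \<beta>', \<gamma>')"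
    by (cases t, cases t') auto
  have "(128 :: int) dvd \<alpha> - \<alpha>'" "(128 :: int) dvd \<beta> - \<beta>'" "(128 :: int) dvd \<gamma> - \<gamma>'"
    using assms unfolding t by (auto simp: mod_eq_dvd_iff)
  then have "(128 :: 'a) dvd of_int (\<alpha> - \<alpha>')" "(128 :: 'a) dvd of_int (\<beta> - \<beta>')"
    "(128 :: 'a) dvd of_int (\<gamma> - \<gamma>')"
    by (metis of_int_dvd_of_int of_int_numeral)+
  then have "(128 :: 'a) dvd of_int (\<alpha> - \<alpha>') * c ^ 4 + of_int (\<beta> - \<beta>') * c\<^sup>2 * x
      + of_int (\<gamma> - \<gamma>') * x\<^sup>2"
    by (intro dvd_add dvd_mult2)
  then show ?thesis
    unfolding t by (simp add: algebra_simps)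
qed

lemma ramanujan_phi_power_qform_cong:
  assumes "3 \<le> E" "binomial_tail_vanishes (int E) t"
    "coeffs_mod_128 (expand_coeffs (int E) t) = coeffs_mod_128 t'"
  shows "128 dvd (ramanujan_phi\<^sup>2) ^ E * qform t phi2 q_psi4_sq
    - phi2 ^ (2 * E) * qform t' phi2 q_psi4_sq"
  using dvd_diff_trans[OF power_qform_reduction[OF ramanujan_phi_square' assms(1,2)]
      dvd_diff_mult_left[OF qform_coeffs_cong[OF assms(3)]]] .

lemma phi_form_even_part_cong:
  assumes "128 dvd F - phi_form t m n" "odd (m + n)" "7 \<le> m + n"
    "binomial_tail_vanishes (int ((m + n) div 2)) (even_part_coeffs t)"
    "coeffs_mod_128 (expand_coeffs (int ((m + n) div 2)) (even_part_coeffs t)) = coeffs_mod_128 t'"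
    "m' = m + n" "n' = 2 * n"
  shows "128 dvd fps_even_part F - phi_form t' m' n'"
proof -
  define E where "E = (m + n) div 2"
  have mn: "m + n = 2 * E + 1" and "3 \<le> E"
    using assms(2,3) by (auto simp: E_def elim!: oddE)
  have "128 dvd ramanujan_phi * phi2 * phi_neg_inv2 ^ (2 * n) * ((ramanujan_phi\<^sup>2) ^ E *
      qform (even_part_coeffs t) phi2 q_psi4_sq - phi2 ^ (2 * E) * qform t' phi2 q_psi4_sq)"
    using ramanujan_phi_power_qform_cong[OF \<open>3 \<le> E\<close>] assms(4,5) unfolding E_def by simp
  then have "128 dvd fps_even_part (phi_form t m n) - phi_form t' m' n'"
    unfolding fps_even_part_phi_form unfolding phi_form_def mn assms(6,7)
    by (simp add: power_add algebra_simps flip: power_mult)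
  with assms(1) show ?thesis
    by (rule fps_even_part_cong_trans)
qed

lemma phi_form_odd_part_cong:
  assumes "odd (m + n)" "7 \<le> m + n"
    "binomial_tail_vanishes (int ((m + n) div 2)) (odd_part_coeffs t)"
    "coeffs_mod_128 (expand_coeffs (int ((m + n) div 2)) (odd_part_coeffs t)) = coeffs_mod_128 t'"
  shows "128 dvd fps_odd_part (phi_form t m n) - phi_psi4_form t' (m + n - 1) (2 * n)"
proof -
  define E where "E = (m + n) div 2"
  have mn: "m + n = 2 * E + 1" and "3 \<le> E"
    using assms(1,2) by (auto simp: E_def elim!: oddE)
  have "128 dvd ramanujan_phi * phi_neg_inv2 ^ (2 * n) * psi4 *
      ((ramanujan_phi\<^sup>2) ^ E * qform (odd_part_coeffs t) phi2 q_psi4_sq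
        - phi2 ^ (2 * E) * qform t' phi2 q_psi4_sq)"
    using ramanujan_phi_power_qform_cong[OF \<open>3 \<le> E\<close>] assms(3,4) unfolding E_def by simp
  then show ?thesis
    unfolding fps_odd_part_phi_form unfolding phi_psi4_form_def mn
    by (simp add: power_add algebra_simps flip: power_mult)
qed

lemma phi_psi4_form_even_part_cong:
  assumes "even (m + n)" "6 \<le> m + n"
    "binomial_tail_vanishes (int ((m + n) div 2)) (even_part_coeffs t)"
    "coeffs_mod_128 (expand_coeffs (int ((m + n) div 2)) (even_part_coeffs t)) = coeffs_mod_128 t'"
  shows "128 dvd fps_even_part (phi_psi4_form t m n) - psi2_form t' (m + n + 1) (2 * n)"
proof -
  define E where "E = (m + n) div 2"
  have mn: "m + n = 2 * E" and "3 \<le> E"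
    using assms(1,2) by (auto simp: E_def elim!: evenE)
  have "128 dvd phi2 * phi_neg_inv2 ^ (2 * n) * psi2 *
      ((ramanujan_phi\<^sup>2) ^ E * qform (even_part_coeffs t) phi2 q_psi4_sq
        - phi2 ^ (2 * E) * qform t' phi2 q_psi4_sq)"
    using ramanujan_phi_power_qform_cong[OF \<open>3 \<le> E\<close>] assms(3,4) unfolding E_def by simp
  then show ?thesis
    unfolding fps_even_part_phi_psi4_form unfolding psi2_form_def mn
    by (simp add: power_add algebra_simps flip: power_mult)
qed

lemma two_dvd_ramanujan_phi_minus_1: "2 dvd ramanujan_phi - 1"
  by (simp add: int_fps_numeral_dvd_iff[of "num.Bit0 num.One", simplified] ramanujan_phi_nth)

lemma two_dvd_phi_neg_inv2_minus_1: "2 dvd phi_neg_inv2 - 1"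
proof -
  obtain g where "ramanujan_phi - 1 = 2 * g"
    using two_dvd_ramanujan_phi_minus_1 ..
  then have "(ramanujan_phi - 1) oo - fps_X oo fps_X ^ 2 = 2 * (g oo - fps_X oo fps_X ^ 2)"
    by (simp add: fps_compose_mult_distrib)
  then have "2 dvd (ramanujan_phi oo - fps_X oo fps_X ^ 2) - 1"
    by (simp add: fps_compose_sub_distrib)
  moreover have
    "phi_neg_inv2 - 1 = - (phi_neg_inv2 * ((ramanujan_phi oo - fps_X oo fps_X ^ 2) - 1))"
    using ramanujan_phi_uminus_X2_mult_inv by (simp add: phi_neg_inv2_def algebra_simps)
  ultimately show ?thesis
    by simp
qed

lemma thirty_two_times_odd_square_cong:
  fixes u :: "'a::comm_ring_1"
  assumes "2 dvd u - 1"
  shows "128 dvd 32 * u\<^sup>2 - 32"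
proof -
  obtain v where "u - 1 = 2 * v"
    using assms ..
  then have "32 * u\<^sup>2 - 32 = 128 * (v * (v + 1))"
    by (simp add: algebra_simps power2_eq_square eq_diff_eq)
  then show ?thesis
    by simp
qed

lemma psi2_form_odd_part_cong:
  assumes "odd (m + n)" "\<beta> mod 128 = 32 * s mod 128"
  shows "128 dvd fps_odd_part (psi2_form (\<alpha>, \<beta>, \<gamma>) m n)
    - 32 * of_int s * (ramanujan_phi * phi2 * psi4 * ramanujan_psi)"
proof -
  define K where "K = (m + n + 1) div 2"
  let ?u = "ramanujan_phi ^ K * phi_neg_inv2 ^ n"
    and ?Q = "ramanujan_phi * phi2 * psi4 * ramanujan_psi"
  have "m + n + 2 = 2 * K + 1"
    using assms(1) by (auto simp: K_def elim!: oddE)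
  then have od: "fps_odd_part (psi2_form (\<alpha>, \<beta>, \<gamma>) m n) = of_int \<beta> * ?u\<^sup>2 * ?Q"
    by (simp add: fps_odd_part_psi2_form power_mult_distrib power_add mult_ac flip: power_mult)
  have "2 dvd ?u - 1"
    using dvd_diff_mult[OF dvd_diff_power dvd_diff_power, OF two_dvd_ramanujan_phi_minus_1
        two_dvd_phi_neg_inv2_minus_1] by simp
  then have "128 dvd (32 * ?u\<^sup>2 - 32) * (of_int s * ?Q)"
    by (intro dvd_mult2 thirty_two_times_odd_square_cong)
  moreover have "(128 :: int) dvd \<beta> - 32 * s"
    using assms(2) by (simp add: mod_eq_dvd_iff)
  then have "128 dvd (of_int (\<beta> - 32 * s) :: int fps) * (?u\<^sup>2 * ?Q)"
    by (intro dvd_mult2) (metis of_int_dvd_of_int of_int_numeral)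
  ultimately have "128 dvd (32 * ?u\<^sup>2 - 32) * (of_int s * ?Q) + of_int (\<beta> - 32 * s) * (?u\<^sup>2 * ?Q)"
    by (rule dvd_add)
  then show ?thesis
    unfolding od by (simp add: algebra_simps)
qed

text \<open>The factor \<open>\<phi>(q\<^sup>2)\<^sup>2\<close> brings \<open>\<phi>(q)\<^sup>3 / \<phi>(-q\<^sup>2)\<^sup>9\<close> into the shape of \<^const>\<open>phi_form\<close>;
  being a function of \<open>q\<^sup>2\<close>, it comes out of the even part as \<open>\<phi>(q)\<^sup>2\<close>, which is then cancelled.\<close>
lemma fps_even_part_btbar_fps_cong: "128 dvd fps_even_part btbar_fps - phi_form (1, 28, 32) 7 18"
proof -
  have "phi2\<^sup>2 * btbar_fps = phi_form (1, 4, 0) 0 9"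
    unfolding btbar_fps_eq phi_neg_inv2_def[symmetric] phi_form_def
    by (simp add: power3_eq_cube power2_eq_square ramanujan_phi_square'[unfolded power2_eq_square]
        algebra_simps eval_nat_numeral)
  then have "ramanujan_phi\<^sup>2 * fps_even_part btbar_fps = fps_even_part (phi_form (1, 4, 0) 0 9)"
    using fps_even_part_compose_X2_mult[of "ramanujan_phi\<^sup>2" btbar_fps]
    by (simp add: phi2_power[symmetric])
  also have "\<dots> = ramanujan_phi\<^sup>2 * (ramanujan_phi * phi2 * phi_neg_inv2 ^ 18 *
      ((ramanujan_phi\<^sup>2) ^ 3 * qform (1, 16, 48) phi2 q_psi4_sq))"
    by (simp add: fps_even_part_phi_form power_numeral_reduce algebra_simps)
  finally have "fps_even_part btbar_fps = ramanujan_phi * phi2 * phi_neg_inv2 ^ 18 *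
      ((ramanujan_phi\<^sup>2) ^ 3 * qform (1, 16, 48) phi2 q_psi4_sq)"
    using ramanujan_phi_nth[of 0] by (auto simp: mult_left_cancel)
  moreover have "128 dvd (ramanujan_phi\<^sup>2) ^ 3 * qform (1, 16, 48) phi2 q_psi4_sq
      - phi2 ^ (2 * 3) * qform (1, 28, 32) phi2 q_psi4_sq"
    by (rule ramanujan_phi_power_qform_cong) simp_all
  then have "128 dvd ramanujan_phi * phi2 * phi_neg_inv2 ^ 18 *
      ((ramanujan_phi\<^sup>2) ^ 3 * qform (1, 16, 48) phi2 q_psi4_sq
        - phi2 ^ 6 * qform (1, 28, 32) phi2 q_psi4_sq)"
    by (intro dvd_mult) simp
  ultimately show ?thesis
    by (simp add: phi_form_def right_diff_distrib algebra_simps power_numeral_reduce)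
qed

lemma phi_form_extraction_cong:
  assumes "128 dvd F - phi_form t m n" "odd (m + n)" "7 \<le> m + n"
    "binomial_tail_vanishes (int ((m + n) div 2)) (odd_part_coeffs t)"
    "coeffs_mod_128 (expand_coeffs (int ((m + n) div 2)) (odd_part_coeffs t)) = coeffs_mod_128 t'"
    "binomial_tail_vanishes (int ((m + 3 * n - 1) div 2)) (even_part_coeffs t')"
    "coeffs_mod_128 (expand_coeffs (int ((m + 3 * n - 1) div 2)) (even_part_coeffs t')) =
      coeffs_mod_128 (\<alpha>, \<beta>, \<gamma>)"
    "\<beta> mod 128 = 32 * s mod 128"
  shows "128 dvd fps_odd_part (fps_even_part (fps_odd_part F))
    - 32 * of_int s * (ramanujan_phi * phi2 * psi4 * ramanujan_psi)"
proof -
  let ?M = "m + n - 1" and ?N = "2 * n"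
  have "128 dvd fps_odd_part (phi_form t m n) - phi_psi4_form t' ?M ?N"
    using assms(2-5) by (rule phi_form_odd_part_cong)
  with assms(1) have O: "128 dvd fps_odd_part F - phi_psi4_form t' ?M ?N"
    by (rule fps_odd_part_cong_trans)
  have "?M + ?N = m + 3 * n - 1" "even (?M + ?N)" "6 \<le> ?M + ?N"
    using assms(2,3) by presburger+
  then have "128 dvd fps_even_part (phi_psi4_form t' ?M ?N)
      - psi2_form (\<alpha>, \<beta>, \<gamma>) (?M + ?N + 1) (2 * ?N)"
    using assms(6,7) by (intro phi_psi4_form_even_part_cong) simp_all
  with O have "128 dvd fps_even_part (fps_odd_part F) - psi2_form (\<alpha>, \<beta>, \<gamma>) (?M + ?N + 1) (2 * ?N)"
    by (rule fps_even_part_cong_trans)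
  moreover have "odd (?M + ?N + 1 + 2 * ?N)"
    using assms(2,3) by presburger
  then have "128 dvd fps_odd_part (psi2_form (\<alpha>, \<beta>, \<gamma>) (?M + ?N + 1) (2 * ?N))
      - 32 * of_int s * (ramanujan_phi * phi2 * psi4 * ramanujan_psi)"
    using assms(8) by (rule psi2_form_odd_part_cong)
  ultimately show ?thesis
    by (rule fps_odd_part_cong_trans)
qed

lemma btbar_fps_even_parts_cong:
  fixes G :: "int fps"
  defines "G \<equiv> btbar_fps"
  shows "128 dvd fps_even_part G - phi_form (1, 28, 32) 7 18"
  and "128 dvd fps_even_part (fps_even_part G) - phi_form (1, 16, 16) 25 36"
  and "128 dvd fps_even_part (fps_even_part (fps_even_part G)) - phi_form (1, 48, 0) 61 72"
  and "128 dvd fps_even_part (fps_even_part (fps_even_part (fps_even_part G)))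
    - phi_form (1, -16, -32) 133 144"
proof -
  show h1: "128 dvd fps_even_part G - phi_form (1, 28, 32) 7 18"
    unfolding G_def by (rule fps_even_part_btbar_fps_cong)
  show h2: "128 dvd fps_even_part (fps_even_part G) - phi_form (1, 16, 16) 25 36"
    by (rule phi_form_even_part_cong[OF h1]) simp_all
  show h3: "128 dvd fps_even_part (fps_even_part (fps_even_part G)) - phi_form (1, 48, 0) 61 72"
    by (rule phi_form_even_part_cong[OF h2]) simp_all
  show "128 dvd fps_even_part (fps_even_part (fps_even_part (fps_even_part G)))
    - phi_form (1, -16, -32) 133 144"
    by (rule phi_form_even_part_cong[OF h3]) simp_all
qed

lemma btbar_fps_extraction_cong:
  fixes G :: "int fps"
  defines "G \<equiv> btbar_fps" and "T \<equiv> \<lambda>F. fps_odd_part (fps_even_part (fps_odd_part F))"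
    and "e \<equiv> fps_even_part" and "Q \<equiv> 32 * (ramanujan_phi * phi2 * psi4 * ramanujan_psi)"
  shows "128 dvd T (e G) - Q"
    and "128 dvd T (e (e G)) + Q"
    and "128 dvd T (e (e (e G))) + Q"
    and "128 dvd T (e (e (e (e G)))) + Q"
proof -
  let ?P = "ramanujan_phi * phi2 * psi4 * ramanujan_psi"
  have "128 dvd T (e G) - 32 * of_int 1 * ?P"
    unfolding T_def e_def G_def
    by (rule phi_form_extraction_cong[where t' = "(30, -32, -32)" and \<alpha> = 30 and \<beta> = 32
          and \<gamma> = 0, OF btbar_fps_even_parts_cong(1)]) simp_all
  then show "128 dvd T (e G) - Q"
    by (simp add: Q_def)
  have "128 dvd T (e (e G)) - 32 * of_int (-1) * ?P"
    unfolding T_def e_def G_def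
    by (rule phi_form_extraction_cong[where t' = "(18, -32, 0)" and \<alpha> = 18 and \<beta> = "-32"
          and \<gamma> = "-64", OF btbar_fps_even_parts_cong(2)]) simp_all
  then show "128 dvd T (e (e G)) + Q"
    by (simp add: Q_def)
  have "128 dvd T (e (e (e G))) - 32 * of_int (-1) * ?P"
    unfolding T_def e_def G_def
    by (rule phi_form_extraction_cong[where t' = "(50, -32, -64)" and \<alpha> = 50 and \<beta> = "-32"
          and \<gamma> = "-64", OF btbar_fps_even_parts_cong(3)]) simp_all
  then show "128 dvd T (e (e (e G))) + Q"
    by (simp add: Q_def)
  have "128 dvd T (e (e (e (e G)))) - 32 * of_int (-1) * ?P"
    unfolding T_def e_def G_def
    by (rule phi_form_extraction_cong[where t' = "(-14, -32, -64)" and \<alpha> = "-14" and \<beta> = "-32"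
          and \<gamma> = "-64", OF btbar_fps_even_parts_cong(4)]) simp_all
  then show "128 dvd T (e (e (e (e G)))) + Q"
    by (simp add: Q_def)
qed

theorem mainTheorem12:
  fixes n :: nat
  shows "[btbar (32*n+20) = btbar (64*n+40)] (mod 128)
       \<and> [btbar (64*n+40) = btbar (128*n+80)] (mod 128)
       \<and> [btbar (128*n+80) = - btbar (16*n+10)] (mod 128)"
proof -
  let ?T = "\<lambda>F. fps_odd_part (fps_even_part (fps_odd_part F))" and ?e = fps_even_part
    and ?G = btbar_fps
  note T = btbar_fps_extraction_cong
  have "128 dvd ?T (?e (?e ?G)) - ?T (?e (?e (?e ?G)))"
    using dvd_diff[OF T(2,3)] by simp
  moreover have "128 dvd ?T (?e (?e (?e ?G))) - ?T (?e (?e (?e (?e ?G))))"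
    using dvd_diff[OF T(3,4)] by simp
  moreover have "128 dvd ?T (?e (?e (?e (?e ?G)))) - - ?T (?e ?G)"
    using dvd_add[OF T(4,1)] by simp
  ultimately have D: "128 dvd (?T (?e (?e ?G)) - ?T (?e (?e (?e ?G)))) $ n"
    "128 dvd (?T (?e (?e (?e ?G))) - ?T (?e (?e (?e (?e ?G))))) $ n"
    "128 dvd (?T (?e (?e (?e (?e ?G)))) - - ?T (?e ?G)) $ n"
    unfolding int_fps_numeral_dvd_iff by blast+
  have I: "2 * (2 * (2 * (2 * n + 1)) + 1) = 16 * n + 10" "2 * (16 * n + 10) = 32 * n + 20"
    "2 * (32 * n + 20) = 64 * n + 40" "2 * (64 * n + 40) = 128 * n + 80"
    by simp_all
  show ?thesis
    using D[unfolded fps_sub_nth fps_neg_nth fps_odd_part_nth fps_even_part_nth I]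
    unfolding cong_iff_dvd_diff btbar_def by blast
qed

end
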